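(* Let $\mathcal{M}$ be a circular embedding of a connected graph $X$ on a closed orientable surface. Let $U$ be its vertex-face transition matrix, $C$ its vertex-face incidence matrix, and $\widehat C=\widehat N^T\widehat M$. Then the multiplicities of the non-real eigenvalues of $U$ sum to $2\operatorname{rk}(C)-2$. Moreover, let $\mu\in(0,1)$ be an eigenvalue of $\widehat C\widehat C^T$ and choose $\theta$ with $\cos\theta=2\mu-1$. Then: - the map $y\mapsto(\cos\theta+1)\widehat Ny-(e^{i\theta}+1)\widehat M\widehat C^Ty$ is an isomorphism from the $\mu$-eigenspace of $\widehat C\widehat C^T$ onto the $e^{i\theta}$-eigenspace of $U$; - the map $y\mapsto(\cos\theta+1)\widehat Ny-(e^{-i\theta}+1)\widehat M\widehat C^Ty$ is an isomorphism from the $\mu$-eigenspace of $\widehat C\widehat C^T$ onto the $e^{-i\theta}$-eigenspace of $U$.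
   Context: Setting. A circular embedding is a cellular embedding in which every face is bounded by a cycle. Arcs are ordered pairs $(u,v)$ with $\{u,v\}$ an edge, and $u$ is the tail. Consistent orientation. Fix an orientation of the face boundaries such that each edge shared by two faces receives opposite directions in them. Then every arc lies in exactly one facial walk. Matrices. - $M$ is the arc-face incidence matrix ($M_{(a,b),f}=1$ iff $(a,b)$ lies in the facial walk of $f$). - $N$ is the arc-tail incidence matrix ($N_{(a,b),u}=1$ iff $a=u$). - $\widehat M,\widehat N$ are these matrices with columns scaled to unit length. - $U=(2\widehat M\widehat M^T-I)(2\widehat N\widehat N^T-I)$. - $C$ is the vertex-face incidence matrix ($C_{u,f}=1$ iff $u$ lies on $f$), and $C=N^TM$. The eigenvalues of $\widehat C\widehat C^T$ lie in $[0,1]$. *)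

theory Defs
  imports "Jordan_Normal_Form.Jordan_Normal_Form" "Jordan_Normal_Form.DL_Rank"
begin

definition simple_graph :: "'v set \<Rightarrow> ('v \<Rightarrow> 'v \<Rightarrow> bool) \<Rightarrow> bool" where
  "simple_graph V E \<longleftrightarrow> finite V \<and> (\<forall>u v. E u v \<longrightarrow> u \<in> V \<and> v \<in> V)
     \<and> (\<forall>u v. E u v \<longrightarrow> E v u) \<and> (\<forall>u. \<not> E u u)"

definition arcs :: "('v \<Rightarrow> 'v \<Rightarrow> bool) \<Rightarrow> ('v \<times> 'v) set" where
  "arcs E = {(u, v). E u v}"

definition connected_graph :: "'v set \<Rightarrow> ('v \<Rightarrow> 'v \<Rightarrow> bool) \<Rightarrow> bool" where
  "connected_graph V E \<longleftrightarrow> (\<forall>u\<in>V. \<forall>v\<in>V. (u, v) \<in> (arcs E)\<^sup>*)"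

text \<open>Rotation systems of a connected graph are exactly
  (up to equivalence) its cellular embeddings in closed orientable surfaces.\<close>
definition rotation_system :: "('v \<Rightarrow> 'v \<Rightarrow> bool) \<Rightarrow> ('v \<times> 'v \<Rightarrow> 'v \<times> 'v) \<Rightarrow> bool" where
  "rotation_system E \<rho> \<longleftrightarrow> bij_betw \<rho> (arcs E) (arcs E)
     \<and> (\<forall>a\<in>arcs E. fst (\<rho> a) = fst a)
     \<and> (\<forall>a\<in>arcs E. \<forall>b\<in>arcs E. fst a = fst b \<longrightarrow> (\<exists>k. (\<rho> ^^ k) a = b))"

text \<open>Face successor: after traversing arc (u,v), continue with the arc following (v,u)
  in the rotation at v.  Faces (consistently oriented facial walks) are its orbits.\<close>
definition face_next :: "('v \<times> 'v \<Rightarrow> 'v \<times> 'v) \<Rightarrow> 'v \<times> 'v \<Rightarrow> 'v \<times> 'v" where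
  "face_next \<rho> a = \<rho> (snd a, fst a)"

definition face_of :: "('v \<times> 'v \<Rightarrow> 'v \<times> 'v) \<Rightarrow> 'v \<times> 'v \<Rightarrow> ('v \<times> 'v) set" where
  "face_of \<rho> a = {(face_next \<rho> ^^ k) a | k. True}"

definition faces :: "('v \<Rightarrow> 'v \<Rightarrow> bool) \<Rightarrow> ('v \<times> 'v \<Rightarrow> 'v \<times> 'v) \<Rightarrow> ('v \<times> 'v) set set" where
  "faces E \<rho> = face_of \<rho> ` arcs E"

text \<open>Circular: every face is bounded by a cycle, i.e. the facial walk has length at least 3
  and passes through distinct vertices.  (The graph must have an edge: the unique face of the
  embedding of the one-vertex graph is not bounded by a cycle.)\<close>
definition circular :: "('v \<Rightarrow> 'v \<Rightarrow> bool) \<Rightarrow> ('v \<times> 'v \<Rightarrow> 'v \<times> 'v) \<Rightarrow> bool" where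
  "circular E \<rho> \<longleftrightarrow> arcs E \<noteq> {} \<and>
     (\<forall>f\<in>faces E \<rho>. card f \<ge> 3 \<and> inj_on fst f)"

definition arc_face_mat :: "('v \<times> 'v) list \<Rightarrow> ('v \<times> 'v) set list \<Rightarrow> real mat" where
  "arc_face_mat as fs = mat (length as) (length fs) (\<lambda>(i, j). if as ! i \<in> fs ! j then 1 else 0)"

definition arc_tail_mat :: "('v \<times> 'v) list \<Rightarrow> 'v list \<Rightarrow> real mat" where
  "arc_tail_mat as vs = mat (length as) (length vs) (\<lambda>(i, j). if fst (as ! i) = vs ! j then 1 else 0)"

definition vertex_face_mat :: "'v list \<Rightarrow> ('v \<times> 'v) set list \<Rightarrow> real mat" where
  "vertex_face_mat vs fs = mat (length vs) (length fs) (\<lambda>(i, j). if (\<exists>a\<in>fs ! j. fst a = vs ! i) then 1 else 0)"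

definition normalize_cols :: "real mat \<Rightarrow> real mat" where
  "normalize_cols A = mat (dim_row A) (dim_col A)
     (\<lambda>(i, j). A $$ (i, j) / sqrt (\<Sum>k<dim_row A. (A $$ (k, j))\<^sup>2))"

definition cmat :: "real mat \<Rightarrow> complex mat" where
  "cmat A = map_mat complex_of_real A"

definition transition_mat :: "real mat \<Rightarrow> real mat \<Rightarrow> real mat" where
  "transition_mat Mh Nh =
     (2 \<cdot>\<^sub>m (Mh * transpose_mat Mh) - 1\<^sub>m (dim_row Mh)) *
     (2 \<cdot>\<^sub>m (Nh * transpose_mat Nh) - 1\<^sub>m (dim_row Nh))"

definition eigenspace :: "complex mat \<Rightarrow> complex \<Rightarrow> complex vec set" where
  "eigenspace A k = {v \<in> carrier_vec (dim_col A). A *\<^sub>v v = k \<cdot>\<^sub>v v}"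

definition eig_mult :: "complex mat \<Rightarrow> complex \<Rightarrow> nat" where
  "eig_mult A k = Polynomial.order k (char_poly A)"

end

(* U is the product of the reflections 2 P - I and 2 Q - I, where P and Q are the orthogonal
   projections onto the column spaces of Mh and Nh.  If Ch Ch^T y = mu y and z^2 + (2 - 4 mu) z + 1 = 0,
   i.e. z = cis (+-theta) with cos theta = 2 mu - 1, then 2 mu Nh y - (z + 1) Mh Ch^T y is a
   z-eigenvector of U, and every eigenvector for z arises in this way.  Hence the non-real eigenvalues
   of U come in conjugate pairs, matched with the eigenvalues of Ch^T Ch in (0,1).  Since U is real
   orthogonal and Ch^T Ch real symmetric, algebraic and geometric multiplicities agree on both sides,
   so the non-real multiplicities add up to 2 (#faces - dim ker Ch - dim ker (Ch^T Ch - 1)).  Rescaling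
   rows and columns gives ker Ch = ker C, and a 1-eigenvector of Ch^T Ch yields a function on arcs that
   is constant on each face and depends only on the tail of the arc; by connectivity it is constant,
   so the 1-eigenspace is a line and the sum is 2 rk C - 2. *)

theory Submission
  imports Defs "Jordan_Normal_Form.Jordan_Normal_Form_Uniqueness"
    "Jordan_Normal_Form.Jordan_Normal_Form_Existence"
begin

section \<open>Kernels and eigenspaces\<close>

lemma kernel_dim_cong:
  assumes "mat_kernel A = mat_kernel B" "dim_col A = dim_col B"
  shows "kernel_dim A = kernel_dim B"
  using assms unfolding kernel_dim_def by simp

lemma kernel_dim_eq_by_linear_bij:
  fixes A :: "'a::field mat" and B :: "'a mat"
  assumes A: "A \<in> carrier_mat ra ca" and B: "B \<in> carrier_mat rb cb"
    and add: "\<And>x y. x \<in> mat_kernel A \<Longrightarrow> y \<in> mat_kernel A \<Longrightarrow> T (x + y) = T x + T y"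
    and smult: "\<And>c x. x \<in> mat_kernel A \<Longrightarrow> T (c \<cdot>\<^sub>v x) = c \<cdot>\<^sub>v T x"
    and bij: "bij_betw T (mat_kernel A) (mat_kernel B)"
  shows "kernel_dim A = kernel_dim B"
proof -
  interpret KA: kernel ra ca A by (unfold_locales, rule A)
  interpret KB: kernel rb cb B by (unfold_locales, rule B)
  interpret LM: linear_map class_ring KA.VK KB.VK T
    by unfold_locales (use bij add smult in \<open>auto simp: module_hom_def bij_betw_def\<close>)
  from kernel_basis_exists[OF A] obtain bs where "finite bs" "KA.basis bs" by auto
  hence "KA.Ker.fin_dim" unfolding KA.Ker.fin_dim_def KA.Ker.basis_def by auto
  hence "KA.dim = KB.dim"
    by (rule LM.dim_eq) (use bij in \<open>auto simp: bij_betw_def\<close>)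
  thus ?thesis using A B by simp
qed

lemma rank_plus_kernel_dim:
  fixes A :: "'a::field mat"
  assumes A: "A \<in> carrier_mat nr nc"
  shows "vec_space.rank nr A + kernel_dim A = nc"
proof -
  interpret V: vec_space "TYPE('a)" nc .
  interpret W: vec_space "TYPE('a)" nr .
  interpret LM: linear_map class_ring V.V W.V "\<lambda>v. A *\<^sub>v v"
    by unfold_locales (use A in \<open>auto simp: module_hom_def mult_add_distrib_mat_vec mult_mat_vec\<close>)
  have cols: "set (cols A) \<subseteq> carrier_vec nr" using A by (auto simp: cols_def)
  have lincomb: "W.lincomb_list c (cols A) = A *\<^sub>v vec nc c" for c
  proof -
    have "\<forall>w\<in>set (cols A). dim_vec w = nr" using cols by auto
    from W.lincomb_list_as_mat_mult[OF this, of c]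
    show ?thesis using mat_of_cols_cols[of A] A by auto
  qed
  have "W.span (set (cols A)) = W.span_list (cols A)" using W.span_list_as_span[OF cols] by simp
  also have "\<dots> = (\<lambda>v. A *\<^sub>v v) ` carrier_vec nc"
  proof -
    have "v \<in> carrier_vec nc \<Longrightarrow> \<exists>c. v = vec nc c" for v :: "'a vec"
      by (rule exI[of _ "\<lambda>i. v $ i"]) auto
    thus ?thesis unfolding W.span_list_def lincomb using A by (auto simp: class_ring_simps)
  qed
  finally have im: "LM.imT = W.span (set (cols A))" unfolding LM.im_def by simp
  have ker: "LM.kerT = mat_kernel A"
    unfolding LM.ker_def mat_kernel_def using A by auto
  from LM.rank_nullity[OF V.fin_dim]
  show ?thesis unfolding im ker V.dim_is_n W.rank_def kernel_dim_def using A by simp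
qed

lemma char_matrix_mult_vec:
  fixes A :: "'a::field mat"
  assumes "A \<in> carrier_mat n n" "v \<in> carrier_vec n"
  shows "char_matrix A e *\<^sub>v v = A *\<^sub>v v - e \<cdot>\<^sub>v v"
  using assms unfolding char_matrix_def
  by (intro eq_vecI)
    (auto simp: scalar_prod_def sum.distrib algebra_simps if_distrib[of "\<lambda>t. _ * t"] cong: if_cong)

lemma mat_kernel_char_matrix:
  fixes A :: "'a::field mat"
  assumes A: "A \<in> carrier_mat n n"
  shows "mat_kernel (char_matrix A e) = {v \<in> carrier_vec n. A *\<^sub>v v = e \<cdot>\<^sub>v v}"
proof -
  have "A *\<^sub>v v - e \<cdot>\<^sub>v v = 0\<^sub>v n \<longleftrightarrow> A *\<^sub>v v = e \<cdot>\<^sub>v v" if v: "v \<in> carrier_vec n" for v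
  proof
    assume h: "A *\<^sub>v v - e \<cdot>\<^sub>v v = 0\<^sub>v n"
    have "(A *\<^sub>v v) $ i = (e \<cdot>\<^sub>v v) $ i" if "i < n" for i
      using arg_cong[OF h, of "\<lambda>x. x $ i"] A v that by simp
    thus "A *\<^sub>v v = e \<cdot>\<^sub>v v" using A v by (intro eq_vecI) auto
  qed (use A v in \<open>auto intro!: eq_vecI\<close>)
  moreover have "char_matrix A e \<in> carrier_mat n n" using A by simp
  ultimately show ?thesis unfolding mat_kernel_def using char_matrix_mult_vec[OF A] by auto
qed

lemma eigenspace_eq_mat_kernel:
  fixes A :: "complex mat"
  assumes "A \<in> carrier_mat n n"
  shows "eigenspace A e = mat_kernel (char_matrix A e)"
  unfolding mat_kernel_char_matrix[OF assms] eigenspace_def using assms by auto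

lemma eigenvalue_iff_kernel_dim_pos:
  fixes A :: "'a::field mat"
  assumes A: "A \<in> carrier_mat n n"
  shows "eigenvalue A e \<longleftrightarrow> kernel_dim (char_matrix A e) > 0"
proof -
  have CM: "char_matrix A e \<in> carrier_mat n n" using A by simp
  interpret KK: kernel n n "char_matrix A e" by unfold_locales (rule CM)
  have kd: "kernel_dim (char_matrix A e) = KK.dim" using CM by simp
  have ev: "eigenvalue A e \<longleftrightarrow> mat_kernel (char_matrix A e) \<noteq> {0\<^sub>v n}"
    unfolding eigenvalue_def eigenvector_def mat_kernel_char_matrix[OF A] using A by auto
  show ?thesis
  proof
    assume "eigenvalue A e"
    show "kernel_dim (char_matrix A e) > 0"
    proof (rule ccontr)
      assume "\<not> kernel_dim (char_matrix A e) > 0"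
      hence d0: "KK.dim = 0" using kd by simp
      from kernel_basis_exists[OF CM] obtain bs where bs: "finite bs" "KK.basis bs" by auto
      have "bs = {}" using KK.Ker.dim_basis[OF bs] d0 bs(1) by simp
      hence "mat_kernel (char_matrix A e) = {0\<^sub>v n}"
        using bs(2) KK.Ker.span_empty unfolding KK.Ker.basis_def by simp
      thus False using ev \<open>eigenvalue A e\<close> by simp
    qed
  next
    assume pos: "kernel_dim (char_matrix A e) > 0"
    show "eigenvalue A e"
    proof (rule ccontr)
      assume "\<not> eigenvalue A e"
      hence k0: "mat_kernel (char_matrix A e) = {0\<^sub>v n}" using ev by simp
      have "KK.Ker.span {0\<^sub>v n} = {0\<^sub>v n}"
        using KK.Ker.span_zero KK.Ker.span_is_subset2[of "{0\<^sub>v n}"] k0 by auto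
      hence "KK.dim = 0" by (intro KK.Ker.dim0I) (simp add: k0)
      thus False using pos kd by simp
    qed
  qed
qed

lemma sum_indicator: "(\<Sum>k\<in>{0..<(N::nat)}. (if P k then 1 else 0 :: real)) = real (card {k. k < N \<and> P k})"
proof (induct N)
  case (Suc N)
  have e: "{k. k < Suc N \<and> P k} = (if P N then insert N {k. k < N \<and> P k} else {k. k < N \<and> P k})"
    by (auto simp: less_Suc_eq)
  show ?case using Suc by (simp add: e)
qed simp


lemma kernel_dim_rescaled:
  fixes A B :: "'a::field mat"
  assumes A: "A \<in> carrier_mat nr nc" and B: "B \<in> carrier_mat nr nc"
    and ent: "\<And>i j. i < nr \<Longrightarrow> j < nc \<Longrightarrow> B $$ (i,j) = \<alpha> i * A $$ (i,j) * \<beta> j"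
    and \<alpha>: "\<And>i. i < nr \<Longrightarrow> \<alpha> i \<noteq> 0" and \<beta>: "\<And>j. j < nc \<Longrightarrow> \<beta> j \<noteq> 0"
  shows "kernel_dim B = kernel_dim A"
proof -
  define T where "T z = vec nc (\<lambda>j. \<beta> j * z $ j)" for z :: "'a vec"
  define T' where "T' z = vec nc (\<lambda>j. z $ j / \<beta> j)" for z :: "'a vec"
  have Tc: "T z \<in> carrier_vec nc" "T' z \<in> carrier_vec nc" for z unfolding T_def T'_def by auto
  have BT: "(B *\<^sub>v z) $ i = \<alpha> i * (A *\<^sub>v T z) $ i" if z: "z \<in> carrier_vec nc" and i: "i < nr" for z i
  proof -
    have "(B *\<^sub>v z) $ i = (\<Sum>j = 0..<nc. B $$ (i,j) * z $ j)"
      using B z i by (simp add: scalar_prod_def row_def)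
    also have "\<dots> = (\<Sum>j = 0..<nc. \<alpha> i * (A $$ (i,j) * (\<beta> j * z $ j)))"
      by (rule sum.cong) (auto simp: ent i ac_simps)
    also have "\<dots> = \<alpha> i * (A *\<^sub>v T z) $ i"
      using A z i by (simp add: scalar_prod_def row_def T_def sum_distrib_left)
    finally show ?thesis .
  qed
  have TT': "T (T' z) = z" "T' (T z) = z" if "z \<in> carrier_vec nc" for z
    using that \<beta> unfolding T_def T'_def by (auto intro!: eq_vecI)
  have kB: "z \<in> mat_kernel B \<longleftrightarrow> z \<in> carrier_vec nc \<and> (\<forall>i<nr. (B *\<^sub>v z) $ i = 0)" for z
    unfolding mat_kernel_def using B by (auto simp: vec_eq_iff)
  have kA: "z \<in> mat_kernel A \<longleftrightarrow> z \<in> carrier_vec nc \<and> (\<forall>i<nr. (A *\<^sub>v z) $ i = 0)" for z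
    unfolding mat_kernel_def using A by (auto simp: vec_eq_iff)
  have BA: "z \<in> mat_kernel B \<longleftrightarrow> z \<in> carrier_vec nc \<and> T z \<in> mat_kernel A" for z
    unfolding kB kA using BT \<alpha> Tc by auto
  show ?thesis
  proof (rule kernel_dim_eq_by_linear_bij[OF B A, of T])
    show "T (x + y) = T x + T y" if "x \<in> mat_kernel B" "y \<in> mat_kernel B" for x y
      using that B unfolding mat_kernel_def T_def by (auto intro!: eq_vecI simp: algebra_simps)
    show "T (c \<cdot>\<^sub>v x) = c \<cdot>\<^sub>v T x" if "x \<in> mat_kernel B" for c x
      using that B unfolding mat_kernel_def T_def by (auto intro!: eq_vecI simp: algebra_simps)
    show "bij_betw T (mat_kernel B) (mat_kernel A)"
      by (rule bij_betw_byWitness[of _ T']) (use TT' BA Tc kA in auto)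
  qed
qed

lemma kernel_dim_char_matrix_mult_transpose_comm:
  fixes X :: "'a::field mat"
  assumes X: "X \<in> carrier_mat r c" and mu: "\<mu> \<noteq> 0"
  shows "kernel_dim (char_matrix (X * transpose_mat X) \<mu>)
       = kernel_dim (char_matrix (transpose_mat X * X) \<mu>)"
proof -
  let ?Xt = "transpose_mat X"
  have Xt: "?Xt \<in> carrier_mat c r" using X by simp
  have XXt: "X * ?Xt \<in> carrier_mat r r" and XtX: "?Xt * X \<in> carrier_mat c c" using X by auto
  have k1: "mat_kernel (char_matrix (X * ?Xt) \<mu>) = {v \<in> carrier_vec r. X *\<^sub>v (?Xt *\<^sub>v v) = \<mu> \<cdot>\<^sub>v v}"
    unfolding mat_kernel_char_matrix[OF XXt] using X Xt by auto
  have k2: "mat_kernel (char_matrix (?Xt * X) \<mu>) = {v \<in> carrier_vec c. ?Xt *\<^sub>v (X *\<^sub>v v) = \<mu> \<cdot>\<^sub>v v}"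
    unfolding mat_kernel_char_matrix[OF XtX] using X Xt by auto
  define T' where "T' z = (1/\<mu>) \<cdot>\<^sub>v (X *\<^sub>v z)" for z
  show ?thesis
  proof (rule kernel_dim_eq_by_linear_bij[OF char_matrix_closed[OF XXt] char_matrix_closed[OF XtX],
        where T = "\<lambda>y. ?Xt *\<^sub>v y"])
    show "?Xt *\<^sub>v (x + y) = ?Xt *\<^sub>v x + ?Xt *\<^sub>v y"
      if "x \<in> mat_kernel (char_matrix (X * ?Xt) \<mu>)" "y \<in> mat_kernel (char_matrix (X * ?Xt) \<mu>)" for x y
      using that Xt unfolding k1 by (auto simp: mult_add_distrib_mat_vec)
    show "?Xt *\<^sub>v (a \<cdot>\<^sub>v x) = a \<cdot>\<^sub>v (?Xt *\<^sub>v x)" if "x \<in> mat_kernel (char_matrix (X * ?Xt) \<mu>)" for a x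
      using that Xt unfolding k1 by (auto simp: mult_mat_vec)
    show "bij_betw (\<lambda>y. ?Xt *\<^sub>v y) (mat_kernel (char_matrix (X * ?Xt) \<mu>)) (mat_kernel (char_matrix (?Xt * X) \<mu>))"
      by (rule bij_betw_byWitness[of _ T'])
        (use mu X Xt in \<open>auto simp: k1 k2 T'_def smult_smult_assoc mult_mat_vec\<close>)
  qed
qed

lemma kernel_dim_map_of_real:
  fixes A :: "real mat"
  assumes A: "A \<in> carrier_mat nr nc"
  shows "kernel_dim (map_mat complex_of_real A) = kernel_dim A"
proof -
  let ?h = "map_mat complex_of_real"
  obtain C where gj: "gauss_jordan_single A = C" by auto
  note g = gauss_jordan_single[OF A gj]
  from g(4) obtain P Q where CPA: "C = P * A" and P: "P \<in> carrier_mat nr nr"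
    and Q: "Q \<in> carrier_mat nr nr" and QP: "Q * P = 1\<^sub>m nr" by auto
  have C: "C \<in> carrier_mat nr nc" by (rule g(2))
  have hC: "?h C = ?h P * ?h A" unfolding CPA by (rule of_real_hom.mat_hom_mult[OF P A])
  have hQP: "?h Q * ?h P = 1\<^sub>m nr"
    by (metis QP P Q of_real_hom.mat_hom_mult of_real_hom.mat_hom_one)
  have k1: "mat_kernel (?h C) = mat_kernel (?h A)" unfolding hC
    by (rule mat_kernel_mult_eq) (use A P Q hQP in auto)
  from g(3) obtain f where pf: "pivot_fun C f nc" unfolding row_echelon_form_def using C by auto
  have "pivot_fun (?h C) f nc" using pf C unfolding pivot_fun_def Let_def by auto
  hence ref: "row_echelon_form (?h C)" unfolding row_echelon_form_def using C by auto
  have hCc: "?h C \<in> carrier_mat nr nc" using C by simp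
  have rows: "{i. i < nr \<and> row (?h C) i \<noteq> 0\<^sub>v nc} = {i. i < nr \<and> row C i \<noteq> 0\<^sub>v nc}"
  proof -
    have "i < nr \<Longrightarrow> row (?h C) i = map_vec complex_of_real (row C i)" for i
      using C by (intro eq_vecI) auto
    thus ?thesis using of_real_hom.vec_hom_zero_iff by auto
  qed
  have "kernel_dim (?h A) = kernel_dim (?h C)" using k1 A C by (intro kernel_dim_cong) auto
  also have "\<dots> = nc - card {i. i < nr \<and> row C i \<noteq> 0\<^sub>v nc}"
    using find_base_vectors(6)[OF ref hCc] hCc unfolding rows kernel_dim_def by simp
  also have "\<dots> = kernel_dim C"
    using find_base_vectors(6)[OF g(3) C] C unfolding kernel_dim_def by simp
  also have "\<dots> = kernel_dim A"
    using mat_kernel_mult_eq[OF A P Q QP] A C unfolding CPA[symmetric] by (intro kernel_dim_cong) auto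
  finally show ?thesis .
qed

lemma real_scalar_prod_self_eq_0:
  fixes v :: "real vec"
  assumes v: "v \<in> carrier_vec n" and z: "v \<bullet> v = 0"
  shows "v = 0\<^sub>v n"
proof -
  have "(\<Sum>i\<in>{0..<n}. v $ i * v $ i) = 0" using z v unfolding scalar_prod_def by simp
  hence "\<forall>i\<in>{0..<n}. v $ i * v $ i = 0" by (subst (asm) sum_nonneg_eq_0_iff) auto
  thus ?thesis using v by (intro eq_vecI) auto
qed

lemma scalar_prod_diff_self:
  fixes a b :: "real vec"
  assumes "a \<in> carrier_vec n" "b \<in> carrier_vec n"
  shows "(a - b) \<bullet> (a - b) = a \<bullet> a - 2 * (a \<bullet> b) + b \<bullet> b"
  using assms unfolding scalar_prod_def
  by (simp add: sum_subtractf sum.distrib sum_distrib_left algebra_simps)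

lemma mat_kernel_transpose_mult_self:
  fixes X :: "real mat"
  assumes X: "X \<in> carrier_mat r c"
  shows "mat_kernel (transpose_mat X * X) = mat_kernel X"
proof
  show "mat_kernel X \<subseteq> mat_kernel (transpose_mat X * X)"
    by (rule mat_kernel_mult_subset[OF X]) (use X in simp)
  show "mat_kernel (transpose_mat X * X) \<subseteq> mat_kernel X"
  proof
    fix z assume "z \<in> mat_kernel (transpose_mat X * X)"
    hence z: "z \<in> carrier_vec c" and z0: "transpose_mat X *\<^sub>v (X *\<^sub>v z) = 0\<^sub>v c"
      unfolding mat_kernel_def using X by auto
    have "(X *\<^sub>v z) \<bullet> (X *\<^sub>v z) = (transpose_mat X *\<^sub>v (X *\<^sub>v z)) \<bullet> z"
      using transpose_vec_mult_scalar[OF X z, of "X *\<^sub>v z"] X z by simp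
    also have "\<dots> = 0" using z0 z by simp
    finally have "X *\<^sub>v z = 0\<^sub>v r" using real_scalar_prod_self_eq_0[of "X *\<^sub>v z" r] X z by simp
    thus "z \<in> mat_kernel X" using z X unfolding mat_kernel_def by auto
  qed
qed

section \<open>Algebraic and geometric multiplicities\<close>

lemma sum_list_min_1_le_min_2:
  fixes xs :: "nat list"
  shows "sum_list (map (min 1) xs) \<le> sum_list (map (min 2) xs)"
  by (induct xs) auto

lemma sum_list_eq_if_min_2_eq_min_1:
  fixes xs :: "nat list"
  assumes "\<forall>x\<in>set xs. x > 0" "sum_list (map (min 2) xs) = sum_list (map (min 1) xs)"
  shows "sum_list xs = sum_list (map (min 1) xs)"
  using assms
proof (induct xs)
  case (Cons x xs)
  have "min 1 x \<le> min 2 x" by simp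
  hence "min 2 x = min 1 x" "sum_list (map (min 2) xs) = sum_list (map (min 1) xs)"
    using Cons(3) sum_list_min_1_le_min_2[of xs] by auto
  with Cons show ?case by auto
qed simp

text \<open>In a Jordan form, blocks of size at least 2 are detected by the second generalized
  eigenspace; if it equals the eigenspace, all blocks are trivial and the algebraic
  multiplicity is the geometric one.\<close>

lemma order_char_poly_eq_kernel_dim:
  fixes A :: "complex mat"
  assumes A: "A \<in> carrier_mat n n"
    and sq: "mat_kernel (char_matrix A e * char_matrix A e) \<subseteq> mat_kernel (char_matrix A e)"
  shows "Polynomial.order e (char_poly A) = kernel_dim (char_matrix A e)"
proof -
  obtain as where "char_poly A = (\<Prod>a\<leftarrow>as. [:-a,1:])" using char_poly_factorized[OF A] by blast
  from jordan_nf_exists[OF A this] obtain n_as where jnf: "jordan_nf A n_as" by auto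
  let ?CM = "char_matrix A e"
  have CM: "?CM \<in> carrier_mat n n" using A by simp
  have k1: "?CM ^\<^sub>m 1 = ?CM" using CM by simp
  have k2: "?CM ^\<^sub>m 2 = ?CM * ?CM" using CM by (simp add: numeral_2_eq_2)
  have "mat_kernel (?CM ^\<^sub>m 2) = mat_kernel ?CM"
    unfolding k2 using sq mat_kernel_mult_subset[OF CM CM] by auto
  hence eq: "dim_gen_eigenspace A e 2 = dim_gen_eigenspace A e 1"
    unfolding dim_gen_eigenspace_def k1 using CM by (intro kernel_dim_cong) (auto simp: k2)
  let ?xs = "map fst (filter (\<lambda>na. snd na = e) n_as)"
  have xs: "map fst [(n, e')\<leftarrow>n_as . e' = e] = ?xs" by (induct n_as) auto
  have pos: "\<forall>x\<in>set ?xs. x > 0" using jnf unfolding jordan_nf_def by force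
  from eq have "sum_list (map (min 2) ?xs) = sum_list (map (min 1) ?xs)"
    unfolding dim_gen_eigenspace[OF jnf] xs by (simp add: o_def)
  from sum_list_eq_if_min_2_eq_min_1[OF pos this]
  have "sum_list ?xs = sum_list (map (min 1) ?xs)" .
  also have "\<dots> = kernel_dim ?CM"
    using dim_gen_eigenspace[OF jnf, of e 1] unfolding dim_gen_eigenspace_def k1 xs
    by (simp add: o_def)
  finally show ?thesis unfolding jordan_nf_order[OF jnf] .
qed

lemma cscalar_prod_smult_right:
  fixes v w :: "complex vec"
  assumes "v \<in> carrier_vec n" "w \<in> carrier_vec n"
  shows "w \<bullet>c (c \<cdot>\<^sub>v v) = cnj c * (w \<bullet>c v)"
  using assms unfolding scalar_prod_def by (simp add: sum_distrib_left ac_simps)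

lemma cscalar_prod_smult_left:
  fixes v w :: "complex vec"
  assumes "v \<in> carrier_vec n" "w \<in> carrier_vec n"
  shows "(c \<cdot>\<^sub>v v) \<bullet>c w = c * (v \<bullet>c w)"
  using assms unfolding scalar_prod_def by (simp add: sum_distrib_left ac_simps)

text \<open>For w in the kernel of (A - e)^2, the vector v = (A - e) w is an e-eigenvector of A, so B
  acts on it by cnj e, which makes v orthogonal to itself.\<close>

lemma mat_kernel_char_matrix_square:
  fixes A B :: "complex mat"
  assumes A: "A \<in> carrier_mat n n"
    and adj: "\<And>v w. v \<in> carrier_vec n \<Longrightarrow> w \<in> carrier_vec n \<Longrightarrow> (A *\<^sub>v v) \<bullet>c w = v \<bullet>c (B *\<^sub>v w)"
    and eig: "\<And>v. v \<in> carrier_vec n \<Longrightarrow> A *\<^sub>v v = e \<cdot>\<^sub>v v \<Longrightarrow> B *\<^sub>v v = cnj e \<cdot>\<^sub>v v"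
  shows "mat_kernel (char_matrix A e * char_matrix A e) \<subseteq> mat_kernel (char_matrix A e)"
proof
  fix w assume w: "w \<in> mat_kernel (char_matrix A e * char_matrix A e)"
  let ?CM = "char_matrix A e"
  have CM: "?CM \<in> carrier_mat n n" using A by simp
  from w CM have wc: "w \<in> carrier_vec n" and w0: "(?CM * ?CM) *\<^sub>v w = 0\<^sub>v n"
    unfolding mat_kernel_def by auto
  define v where "v = ?CM *\<^sub>v w"
  have vc: "v \<in> carrier_vec n" unfolding v_def using CM wc by simp
  have "v \<in> mat_kernel ?CM"
    using w0 CM wc vc unfolding v_def mat_kernel_def by (simp add: assoc_mult_mat_vec)
  hence Av: "A *\<^sub>v v = e \<cdot>\<^sub>v v" unfolding mat_kernel_char_matrix[OF A] by simp
  have "v \<bullet>c v = (A *\<^sub>v w - e \<cdot>\<^sub>v w) \<bullet>c v" unfolding v_def char_matrix_mult_vec[OF A wc] ..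
  also have "\<dots> = (A *\<^sub>v w) \<bullet>c v - e * (w \<bullet>c v)"
    using A wc vc unfolding scalar_prod_def by (simp add: sum_subtractf sum_distrib_left algebra_simps)
  also have "(A *\<^sub>v w) \<bullet>c v = w \<bullet>c (cnj e \<cdot>\<^sub>v v)" using adj[OF wc vc] eig[OF vc Av] by simp
  also have "\<dots> = e * (w \<bullet>c v)" using cscalar_prod_smult_right[OF vc wc] by simp
  finally have "v \<bullet>c v = 0" by simp
  hence "v = 0\<^sub>v n" using conjugate_square_eq_0_vec[OF vc] by simp
  thus "w \<in> mat_kernel ?CM" unfolding v_def mat_kernel_def using wc CM by auto
qed

lemma order_prod_linear_factors:
  fixes as :: "complex list"
  shows "Polynomial.order a (\<Prod>b\<leftarrow>as. [:-b,1:]) = count_list as a"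
proof (induct as)
  case (Cons b as)
  have "(\<Prod>b\<leftarrow>as. [:-b,1:]) \<noteq> (0 :: complex poly)"
    unfolding prod_list_zero_iff by auto
  hence "Polynomial.order a (\<Prod>b\<leftarrow>b#as. [:-b,1:])
      = Polynomial.order a [:-b,1:] + Polynomial.order a (\<Prod>b\<leftarrow>as. [:-b,1:])"
    by (simp add: order_mult del: pCons_eq_iff mult_pCons_left)
  thus ?case using Cons order_linear'[of a "-b"] by auto
qed (simp add: order_0I)

lemma
  fixes A :: "complex mat"
  assumes A: "A \<in> carrier_mat n n"
  shows finite_eigenvalues: "finite {a. eigenvalue A a}"
    and sum_order_char_poly_eigenvalues: "(\<Sum>a\<in>{a. eigenvalue A a}. Polynomial.order a (char_poly A)) = n"
proof -
  obtain as where cp: "char_poly A = (\<Prod>a\<leftarrow>as. [:-a,1:])" and len: "length as = n"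
    using char_poly_factorized[OF A] by blast
  have S: "{a. eigenvalue A a} = set as"
    unfolding eigenvalue_root_char_poly[OF A] cp poly_prod_list_zero_iff by auto
  show "finite {a. eigenvalue A a}" unfolding S by simp
  show "(\<Sum>a\<in>{a. eigenvalue A a}. Polynomial.order a (char_poly A)) = n"
    unfolding S cp order_prod_linear_factors using sum_count_set[of as "set as"] len by simp
qed

lemma cscalar_prod_map_of_real_adjoint:
  fixes X :: "real mat"
  assumes X: "X \<in> carrier_mat r c" and v: "v \<in> carrier_vec c" and w: "w \<in> carrier_vec r"
  shows "(map_mat complex_of_real X *\<^sub>v v) \<bullet>c w
       = v \<bullet>c (map_mat complex_of_real (transpose_mat X) *\<^sub>v w)"
proof -
  have "(map_mat complex_of_real X *\<^sub>v v) \<bullet>c w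
      = (\<Sum>i = 0..<r. (\<Sum>j = 0..<c. of_real (X $$ (i,j)) * v $ j) * cnj (w $ i))"
    using X v w by (simp add: scalar_prod_def row_def)
  also have "\<dots> = (\<Sum>i = 0..<r. \<Sum>j = 0..<c. v $ j * (of_real (X $$ (i,j)) * cnj (w $ i)))"
    by (rule sum.cong[OF refl], subst sum_distrib_right, rule sum.cong[OF refl], simp add: ac_simps)
  also have "\<dots> = (\<Sum>j = 0..<c. \<Sum>i = 0..<r. v $ j * (of_real (X $$ (i,j)) * cnj (w $ i)))"
    by (rule sum.swap)
  also have "\<dots> = v \<bullet>c (map_mat complex_of_real (transpose_mat X) *\<^sub>v w)"
    using X v w by (simp add: scalar_prod_def row_def sum_distrib_left cnj_sum)
  finally show ?thesis .
qed

lemma cmat_carrier: "X \<in> carrier_mat r c \<Longrightarrow> cmat X \<in> carrier_mat r c"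
  unfolding cmat_def by simp

lemma cmat_transpose: "cmat (transpose_mat X) = transpose_mat (cmat X)"
  unfolding cmat_def by (intro eq_matI) auto

lemma cmat_mult: "X \<in> carrier_mat r k \<Longrightarrow> Y \<in> carrier_mat k c \<Longrightarrow> cmat (X * Y) = cmat X * cmat Y"
  unfolding cmat_def by (rule of_real_hom.mat_hom_mult)

lemma cmat_one: "cmat (1\<^sub>m n) = 1\<^sub>m n"
  unfolding cmat_def by (rule of_real_hom.mat_hom_one)

lemma cmat_char_matrix:
  "A \<in> carrier_mat n n \<Longrightarrow> cmat (char_matrix A e) = char_matrix (cmat A) (complex_of_real e)"
  unfolding cmat_def char_matrix_def by (intro eq_matI) auto

section \<open>Projections, reflections and the unit circle\<close>

lemma diff_smult_vec_eq_add:
  fixes a b :: "'a::comm_ring_1 vec"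
  shows "a \<in> carrier_vec k \<Longrightarrow> b \<in> carrier_vec k \<Longrightarrow> a - c \<cdot>\<^sub>v b = a + (- c) \<cdot>\<^sub>v b"
  by (intro eq_vecI) (auto simp: algebra_simps)

definition col_proj :: "'a::field mat \<Rightarrow> 'a vec \<Rightarrow> 'a vec" where
  "col_proj X v = X *\<^sub>v (transpose_mat X *\<^sub>v v)"

lemma dim_col_proj [simp]: "dim_vec (col_proj X v) = dim_row X"
  unfolding col_proj_def by simp

lemma col_proj_carrier [simp]: "X \<in> carrier_mat r c \<Longrightarrow> col_proj X v \<in> carrier_vec r"
  unfolding carrier_vec_def by simp

lemma col_proj_add:
  "X \<in> carrier_mat r c \<Longrightarrow> u \<in> carrier_vec r \<Longrightarrow> w \<in> carrier_vec r \<Longrightarrow>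
    col_proj X (u + w) = col_proj X u + col_proj X w"
  unfolding col_proj_def
  using mult_add_distrib_mat_vec[of "transpose_mat X" c r u w] mult_add_distrib_mat_vec[of X r c]
  by simp

lemma col_proj_smult:
  "X \<in> carrier_mat r c \<Longrightarrow> u \<in> carrier_vec r \<Longrightarrow> col_proj X (a \<cdot>\<^sub>v u) = a \<cdot>\<^sub>v col_proj X u"
  unfolding col_proj_def using mult_mat_vec[of "transpose_mat X" c r u] mult_mat_vec[of X r c]
  by simp

lemma col_proj_lincomb:
  "X \<in> carrier_mat r c \<Longrightarrow> u \<in> carrier_vec r \<Longrightarrow> w \<in> carrier_vec r \<Longrightarrow>
    col_proj X (a \<cdot>\<^sub>v u + b \<cdot>\<^sub>v w) = a \<cdot>\<^sub>v col_proj X u + b \<cdot>\<^sub>v col_proj X w"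
  by (simp add: col_proj_add col_proj_smult)

lemma transpose_mult_col_proj:
  assumes X: "X \<in> carrier_mat r c" and XtX: "transpose_mat X * X = 1\<^sub>m c" and v: "v \<in> carrier_vec r"
  shows "transpose_mat X *\<^sub>v col_proj X v = transpose_mat X *\<^sub>v v"
proof -
  have "transpose_mat X *\<^sub>v col_proj X v = (transpose_mat X * X) *\<^sub>v (transpose_mat X *\<^sub>v v)"
    unfolding col_proj_def using X v by (simp add: assoc_mult_mat_vec)
  thus ?thesis using XtX X v by simp
qed

lemma col_proj_idem:
  assumes "X \<in> carrier_mat r c" "transpose_mat X * X = 1\<^sub>m c" "v \<in> carrier_vec r"
  shows "col_proj X (col_proj X v) = col_proj X v"
  using transpose_mult_col_proj[OF assms] unfolding col_proj_def[of X "col_proj X v"]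
  by (simp add: col_proj_def)

lemma reflection_mat:
  fixes X :: "'a::field mat"
  assumes X: "X \<in> carrier_mat r c" and XtX: "transpose_mat X * X = 1\<^sub>m c"
  defines "R \<equiv> 2 \<cdot>\<^sub>m (X * transpose_mat X) - 1\<^sub>m r"
  shows "R \<in> carrier_mat r r" "transpose_mat R = R" "R * R = 1\<^sub>m r"
    "\<And>u. u \<in> carrier_vec r \<Longrightarrow> R *\<^sub>v u = 2 \<cdot>\<^sub>v col_proj X u - u"
proof -
  define P where "P = X * transpose_mat X"
  have P: "P \<in> carrier_mat r r" unfolding P_def using X by simp
  have Xt: "transpose_mat X \<in> carrier_mat c r" using X by simp
  have PT: "transpose_mat P = P" unfolding P_def using X by (simp add: transpose_mult[OF X])
  have "P * P = X * ((transpose_mat X * X) * transpose_mat X)"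
    unfolding P_def using X Xt by (simp add: assoc_mult_mat[of _ r c _ r _ r] assoc_mult_mat[of _ c r _ c _ r])
  hence PP: "P * P = P" unfolding XtX P_def using Xt by simp
  have R: "R = 2 \<cdot>\<^sub>m P - 1\<^sub>m r" unfolding R_def P_def ..
  show Rc: "R \<in> carrier_mat r r" unfolding R by (rule minus_carrier_mat) (use P in simp)
  have Psym: "P $$ (j,i) = P $$ (i,j)" if "i < r" "j < r" for i j
    using arg_cong[OF PT, of "\<lambda>M. M $$ (i,j)"] P that by simp
  show "transpose_mat R = R" unfolding R using P Psym by (intro eq_matI) auto
  have "R * R = 4 \<cdot>\<^sub>m (P * P) - 4 \<cdot>\<^sub>m P + 1\<^sub>m r"
    unfolding R using P by (intro eq_matI) (auto simp: scalar_prod_def sum.distrib sum_subtractf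
        sum_distrib_left algebra_simps if_distrib[of "\<lambda>t. _ * t"] cong: if_cong)
  also have "\<dots> = 1\<^sub>m r" unfolding PP using P by (intro eq_matI) auto
  finally show "R * R = 1\<^sub>m r" .
  show "R *\<^sub>v u = 2 \<cdot>\<^sub>v col_proj X u - u" if u: "u \<in> carrier_vec r" for u
  proof -
    have "R *\<^sub>v u = 2 \<cdot>\<^sub>v (P *\<^sub>v u) - u"
      unfolding R using P u by (intro eq_vecI) (auto simp: scalar_prod_def sum_distrib_left
        sum_subtractf algebra_simps if_distrib[of "\<lambda>t. _ * t"] cong: if_cong)
    thus ?thesis unfolding P_def col_proj_def using X u by simp
  qed
qed

lemma transpose_mult_involutions:
  fixes R1 R2 :: "'a::comm_ring_1 mat"
  assumes R1: "R1 \<in> carrier_mat r r" "transpose_mat R1 = R1" "R1 * R1 = 1\<^sub>m r"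
    and R2: "R2 \<in> carrier_mat r r" "transpose_mat R2 = R2" "R2 * R2 = 1\<^sub>m r"
  shows "transpose_mat (R1 * R2) * (R1 * R2) = 1\<^sub>m r"
proof -
  have "transpose_mat (R1 * R2) * (R1 * R2) = (R2 * R1) * (R1 * R2)"
    using R1 R2 by (simp add: transpose_mult[of _ r r])
  also have "\<dots> = R2 * (R1 * (R1 * R2))" using R1 R2 by (rule_tac assoc_mult_mat) auto
  also have "R1 * (R1 * R2) = (R1 * R1) * R2" using R1 R2 by (rule_tac assoc_mult_mat[symmetric]) auto
  finally show ?thesis using R1 R2 by simp
qed

lemma cis_quadratic:
  assumes "cos \<theta> = 2 * \<mu> - 1"
  shows "(cis \<theta>)^2 + (2 - 4 * complex_of_real \<mu>) * cis \<theta> + 1 = 0"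
proof -
  have \<mu>: "\<mu> = (cos \<theta> + 1) / 2" using assms by simp
  have s: "sin \<theta> * sin \<theta> = 1 - cos \<theta> * cos \<theta>"
    using sin_cos_squared_add[of \<theta>] by (simp add: power2_eq_square)
  show ?thesis unfolding \<mu> by (simp add: complex_eq_iff power2_eq_square algebra_simps s)
qed

lemma unit_quadratic:
  assumes "z * cnj z = 1"
  shows "z^2 + (2 - 4 * complex_of_real ((1 + Re z) / 2)) * z + 1 = 0"
proof -
  have e: "2 - 4 * complex_of_real ((1 + Re z) / 2) = - (z + cnj z)"
    by (simp add: complex_add_cnj field_simps)
  show ?thesis unfolding e using assms by (simp add: power2_eq_square algebra_simps)
qed

lemma quadratic_csqrt_root:
  fixes b :: complex
  shows "((- b + csqrt (b^2 - 4)) / 2)^2 + b * ((- b + csqrt (b^2 - 4)) / 2) + 1 = 0"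
proof -
  define s where "s = csqrt (b^2 - 4)"
  have "((- b + s) / 2)^2 + b * ((- b + s) / 2) + 1 = (s^2 + 4 - b^2) / 4"
    by (simp add: power2_eq_square field_simps)
  also have "s^2 = b^2 - 4" unfolding s_def by simp
  finally show ?thesis unfolding s_def by simp
qed

lemma unit_Re_Im:
  assumes "z * cnj z = 1"
  shows "Re z ^ 2 + Im z ^ 2 = 1"
  using assms complex_mult_cnj[of z] by (metis of_real_eq_1_iff)

lemma cos_sign_mult: "\<sigma> = 1 \<or> \<sigma> = -1 \<Longrightarrow> cos (\<sigma> * t) = cos t"
  by auto

lemma sin_sign_mult: "\<sigma> = 1 \<or> \<sigma> = -1 \<Longrightarrow> sin (\<sigma> * t) = \<sigma> * sin t"
  by auto

lemma sign_mult_Im_cis_arccos_pos: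
  assumes \<sigma>: "\<sigma> = 1 \<or> \<sigma> = -1" and x: "- 1 < x" "x < 1"
  shows "0 < \<sigma> * Im (cis (\<sigma> * arccos x))"
proof -
  have "0 < arccos x" "arccos x < pi" using arccos_lt_bounded[OF x] by auto
  hence "0 < sin (arccos x)" by (rule sin_gt_zero)
  moreover have "\<sigma> * \<sigma> = 1" using \<sigma> by auto
  ultimately show ?thesis by (simp add: sin_sign_mult[OF \<sigma>] mult.assoc[symmetric])
qed

lemma cis_sign_mult_arccos_Re:
  assumes unit: "z * cnj z = 1" and \<sigma>: "\<sigma> = 1 \<or> \<sigma> = -1" and im: "0 < \<sigma> * Im z"
  shows "cis (\<sigma> * arccos (Re z)) = z"
proof -
  have sq: "Re z ^ 2 + Im z ^ 2 = 1" by (rule unit_Re_Im[OF unit])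
  hence "Re z ^ 2 \<le> 1" using zero_le_power2[of "Im z"] by linarith
  hence "\<bar>Re z\<bar> \<le> 1" by (simp add: abs_square_le_1)
  hence Re: "- 1 \<le> Re z" "Re z \<le> 1" by auto
  have "sin (arccos (Re z)) = sqrt (1 - Re z ^ 2)" using Re by (rule sin_arccos)
  also have "1 - Re z ^ 2 = Im z ^ 2" using sq by simp
  also have "sqrt (Im z ^ 2) = \<bar>Im z\<bar>" by (rule real_sqrt_abs)
  also have "\<dots> = \<sigma> * Im z" using \<sigma> im by auto
  finally have sin: "sin (arccos (Re z)) = \<sigma> * Im z" .
  show ?thesis
  proof (rule complex_eqI)
    show "Re (cis (\<sigma> * arccos (Re z))) = Re z" using Re by (simp add: cos_sign_mult[OF \<sigma>] cos_arccos)
    have "\<sigma> * \<sigma> = 1" using \<sigma> by auto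
    thus "Im (cis (\<sigma> * arccos (Re z))) = Im z"
      by (simp add: sin_sign_mult[OF \<sigma>] sin mult.assoc[symmetric])
  qed
qed

section \<open>Two matrices with orthonormal columns\<close>

locale orthonormal_pair =
  fixes A B :: "real mat" and m f n :: nat
  assumes A_carrier: "A \<in> carrier_mat m f" and B_carrier: "B \<in> carrier_mat m n"
    and A_orthonormal: "transpose_mat A * A = 1\<^sub>m f"
    and B_orthonormal: "transpose_mat B * B = 1\<^sub>m n"
begin

abbreviation "Ac \<equiv> cmat A"
abbreviation "Bc \<equiv> cmat B"
abbreviation "U \<equiv> cmat (transition_mat A B)"
abbreviation "BtA \<equiv> transpose_mat B * A"
abbreviation "Ch \<equiv> cmat BtA"

lemma Ac_carrier: "Ac \<in> carrier_mat m f" and Bc_carrier: "Bc \<in> carrier_mat m n"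
  and Ch_carrier: "Ch \<in> carrier_mat n f"
  using cmat_carrier A_carrier B_carrier by auto

lemma Ac_orthonormal: "transpose_mat Ac * Ac = 1\<^sub>m f"
  using cmat_mult[of "transpose_mat A" f m A f] A_carrier A_orthonormal cmat_one cmat_transpose
  by simp

lemma Bc_orthonormal: "transpose_mat Bc * Bc = 1\<^sub>m n"
  using cmat_mult[of "transpose_mat B" n m B n] B_carrier B_orthonormal cmat_one cmat_transpose
  by simp

lemma dim_row_Ac_Bc [simp]: "dim_row Ac = m" "dim_row Bc = m"
  using Ac_carrier Bc_carrier by auto

lemma Ch_eq: "Ch = transpose_mat Bc * Ac"
  using cmat_mult[of "transpose_mat B" n m A f] A_carrier B_carrier by (simp add: cmat_transpose)

lemma transpose_Ch: "transpose_mat Ch = transpose_mat Ac * Bc"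
  unfolding Ch_eq using Ac_carrier Bc_carrier by (simp add: transpose_mult[of _ n m _ f])

lemma transpose_Ch_mult_vec:
  "y \<in> carrier_vec n \<Longrightarrow> transpose_mat Ch *\<^sub>v y = transpose_mat Ac *\<^sub>v (Bc *\<^sub>v y)"
  unfolding transpose_Ch using Ac_carrier Bc_carrier by simp

lemma Ch_transpose_Ch_mult_vec:
  assumes y: "y \<in> carrier_vec n"
  shows "(Ch * transpose_mat Ch) *\<^sub>v y = transpose_mat Bc *\<^sub>v col_proj Ac (Bc *\<^sub>v y)"
proof -
  have Ch: "Ch *\<^sub>v z = transpose_mat Bc *\<^sub>v (Ac *\<^sub>v z)" if "z \<in> carrier_vec f" for z
    unfolding Ch_eq using Ac_carrier Bc_carrier that by (simp add: assoc_mult_mat_vec[of _ n m _ f])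
  have "(Ch * transpose_mat Ch) *\<^sub>v y = Ch *\<^sub>v (transpose_mat Ch *\<^sub>v y)"
    using Ch_carrier y by (simp add: assoc_mult_mat_vec[of _ n f _ n])
  also have "\<dots> = transpose_mat Bc *\<^sub>v col_proj Ac (Bc *\<^sub>v y)"
    unfolding transpose_Ch_mult_vec[OF y] col_proj_def using Ac_carrier Bc_carrier y by (simp add: Ch)
  finally show ?thesis .
qed

lemma Bc_mult_transpose: "v \<in> carrier_vec n \<Longrightarrow> transpose_mat Bc *\<^sub>v (Bc *\<^sub>v v) = v"
  using Bc_carrier Bc_orthonormal by (simp flip: assoc_mult_mat_vec[of _ n m _ n])

definition reflA :: "complex mat" where "reflA = 2 \<cdot>\<^sub>m (Ac * transpose_mat Ac) - 1\<^sub>m m"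
definition reflB :: "complex mat" where "reflB = 2 \<cdot>\<^sub>m (Bc * transpose_mat Bc) - 1\<^sub>m m"

lemmas reflA = reflection_mat[OF Ac_carrier Ac_orthonormal, folded reflA_def]
lemmas reflB = reflection_mat[OF Bc_carrier Bc_orthonormal, folded reflB_def]

lemma U_eq: "U = reflA * reflB"
proof -
  have refl: "cmat (2 \<cdot>\<^sub>m (X * transpose_mat X) - 1\<^sub>m m)
      = 2 \<cdot>\<^sub>m (cmat X * transpose_mat (cmat X)) - 1\<^sub>m m" if "X \<in> carrier_mat m k" for X k
    using that by (simp add: cmat_mult[symmetric] cmat_transpose[symmetric])
      (auto simp: cmat_def intro!: eq_matI)
  have "transition_mat A B = (2 \<cdot>\<^sub>m (A * transpose_mat A) - 1\<^sub>m m) * (2 \<cdot>\<^sub>m (B * transpose_mat B) - 1\<^sub>m m)"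
    unfolding transition_mat_def using A_carrier B_carrier by simp
  hence "U = cmat (2 \<cdot>\<^sub>m (A * transpose_mat A) - 1\<^sub>m m) * cmat (2 \<cdot>\<^sub>m (B * transpose_mat B) - 1\<^sub>m m)"
    by (simp add: cmat_mult[of _ m m _ m] minus_carrier_mat)
  thus ?thesis unfolding reflA_def reflB_def refl[OF A_carrier] refl[OF B_carrier] .
qed

lemma U_carrier: "U \<in> carrier_mat m m"
  unfolding U_eq using reflA reflB by simp

lemma U_mult_vec:
  assumes v: "v \<in> carrier_vec m"
  shows "U *\<^sub>v v = 4 \<cdot>\<^sub>v col_proj Ac (col_proj Bc v) + (-2) \<cdot>\<^sub>v col_proj Ac v + (-2) \<cdot>\<^sub>v col_proj Bc v + v"
proof -
  have Bv: "reflB *\<^sub>v v = 2 \<cdot>\<^sub>v col_proj Bc v + (-1) \<cdot>\<^sub>v v"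
    using reflB(4) v Bc_carrier by (auto intro!: eq_vecI)
  have "U *\<^sub>v v = reflA *\<^sub>v (reflB *\<^sub>v v)"
    unfolding U_eq using reflA(1) reflB(1) v by (simp add: assoc_mult_mat_vec)
  also have "\<dots> = 2 \<cdot>\<^sub>v col_proj Ac (2 \<cdot>\<^sub>v col_proj Bc v + (-1) \<cdot>\<^sub>v v)
      - (2 \<cdot>\<^sub>v col_proj Bc v + (-1) \<cdot>\<^sub>v v)"
    unfolding Bv using reflA(4) v Bc_carrier by simp
  also have "col_proj Ac (2 \<cdot>\<^sub>v col_proj Bc v + (-1) \<cdot>\<^sub>v v)
      = 2 \<cdot>\<^sub>v col_proj Ac (col_proj Bc v) + (-1) \<cdot>\<^sub>v col_proj Ac v"
    using v Ac_carrier Bc_carrier by (simp add: col_proj_add col_proj_smult)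
  finally show ?thesis
    using v Ac_carrier Bc_carrier by (intro eq_vecI) (auto simp: algebra_simps)
qed

lemma transpose_U_mult_U: "transpose_mat U * U = 1\<^sub>m m"
  unfolding U_eq by (rule transpose_mult_involutions) (use reflA reflB in auto)

lemma U_adjoint:
  "v \<in> carrier_vec m \<Longrightarrow> w \<in> carrier_vec m \<Longrightarrow> (U *\<^sub>v v) \<bullet>c w = v \<bullet>c (transpose_mat U *\<^sub>v w)"
  using cscalar_prod_map_of_real_adjoint[of "transition_mat A B" m m v w] U_carrier
  unfolding cmat_transpose[symmetric] by (simp add: cmat_def)

lemma BtA_carrier: "BtA \<in> carrier_mat n f"
  and gram_carrier: "transpose_mat BtA * BtA \<in> carrier_mat f f"
  using A_carrier B_carrier by auto

lemma gram_mult_vec: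
  assumes z: "z \<in> carrier_vec f"
  shows "(transpose_mat BtA * BtA) *\<^sub>v z = transpose_mat A *\<^sub>v (B *\<^sub>v (transpose_mat B *\<^sub>v (A *\<^sub>v z)))"
proof -
  have "transpose_mat BtA = transpose_mat A * B"
    using A_carrier B_carrier by (simp add: transpose_mult[of _ n m _ f])
  thus ?thesis
    using A_carrier B_carrier z by (simp add: assoc_mult_mat_vec[of _ f n _ f] assoc_mult_mat_vec[of _ f m _ n])
qed

lemma gram_fixed_if_common_image:
  assumes v: "v \<in> carrier_vec f" and w: "w \<in> carrier_vec n" and eq: "A *\<^sub>v v = B *\<^sub>v w"
  shows "(transpose_mat BtA * BtA) *\<^sub>v v = v"
proof -
  have A: "transpose_mat A *\<^sub>v (A *\<^sub>v v) = v" and B: "transpose_mat B *\<^sub>v (B *\<^sub>v w) = w"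
    using A_carrier A_orthonormal B_carrier B_orthonormal v w
    by (simp_all flip: assoc_mult_mat_vec[of _ f m _ f] assoc_mult_mat_vec[of _ n m _ n])
  show ?thesis unfolding gram_mult_vec[OF v] eq B unfolding eq[symmetric] A ..
qed

text \<open>The vectors A z and B B^T A z both have squared length and inner product z \<bullet> z,
  so they coincide.\<close>

lemma common_image_if_gram_fixed:
  assumes z: "z \<in> carrier_vec f" and fixed: "(transpose_mat BtA * BtA) *\<^sub>v z = z"
  shows "A *\<^sub>v z = B *\<^sub>v (transpose_mat B *\<^sub>v (A *\<^sub>v z))"
proof -
  define p where "p = A *\<^sub>v z"
  define y where "y = transpose_mat B *\<^sub>v p"
  define x where "x = B *\<^sub>v y"
  have pc: "p \<in> carrier_vec m" and yc: "y \<in> carrier_vec n" and xc: "x \<in> carrier_vec m"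
    unfolding p_def y_def x_def using A_carrier B_carrier z by auto
  have Atx: "transpose_mat A *\<^sub>v x = z" using fixed unfolding gram_mult_vec[OF z] x_def y_def p_def .
  have AtA: "transpose_mat A *\<^sub>v (A *\<^sub>v z) = z" and BtB: "transpose_mat B *\<^sub>v (B *\<^sub>v y) = y"
    using A_carrier A_orthonormal B_carrier B_orthonormal z yc
    by (simp_all flip: assoc_mult_mat_vec[of _ f m _ f] assoc_mult_mat_vec[of _ n m _ n])
  have pp: "p \<bullet> p = z \<bullet> z"
    using transpose_vec_mult_scalar[OF A_carrier z pc] AtA unfolding p_def by simp
  have xp: "x \<bullet> p = z \<bullet> z"
    using transpose_vec_mult_scalar[OF A_carrier z xc] Atx unfolding p_def by simp
  have xx: "x \<bullet> x = y \<bullet> y"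
    using transpose_vec_mult_scalar[OF B_carrier yc xc] BtB unfolding x_def by simp
  have px: "p \<bullet> x = y \<bullet> y"
    using transpose_vec_mult_scalar[OF B_carrier yc pc] unfolding x_def y_def by simp
  have "(p - x) \<bullet> (p - x) = 0"
    unfolding scalar_prod_diff_self[OF pc xc] using pp xp xx px comm_scalar_prod[OF pc xc] by simp
  hence px0: "p - x = 0\<^sub>v m" using real_scalar_prod_self_eq_0[of "p - x" m] pc xc by simp
  have "p $ i = x $ i" if "i < m" for i
    using arg_cong[OF px0, of "\<lambda>v. v $ i"] that pc xc by simp
  hence "p = x" using pc xc by (intro eq_vecI) auto
  thus ?thesis unfolding p_def x_def y_def .
qed

definition lift :: "complex \<Rightarrow> complex \<Rightarrow> complex vec \<Rightarrow> complex vec" where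
  "lift \<mu> z y = (2 * \<mu>) \<cdot>\<^sub>v (Bc *\<^sub>v y) - (z + 1) \<cdot>\<^sub>v (Ac *\<^sub>v (transpose_mat Ch *\<^sub>v y))"

lemma lift_eq:
  assumes "y \<in> carrier_vec n"
  shows "lift \<mu> z y = (2 * \<mu>) \<cdot>\<^sub>v (Bc *\<^sub>v y) + (- (z + 1)) \<cdot>\<^sub>v col_proj Ac (Bc *\<^sub>v y)"
proof -
  have "Ac *\<^sub>v (transpose_mat Ch *\<^sub>v y) = col_proj Ac (Bc *\<^sub>v y)"
    unfolding transpose_Ch_mult_vec[OF assms] col_proj_def ..
  thus ?thesis unfolding lift_def
    using diff_smult_vec_eq_add[of "(2 * \<mu>) \<cdot>\<^sub>v (Bc *\<^sub>v y)" m] assms Ac_carrier Bc_carrier by simp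
qed

lemma lift_carrier: "y \<in> carrier_vec n \<Longrightarrow> lift \<mu> z y \<in> carrier_vec m"
  unfolding lift_def using Ac_carrier Bc_carrier Ch_carrier by simp

lemma lift_add:
  assumes x: "x \<in> carrier_vec n" and y: "y \<in> carrier_vec n"
  shows "lift \<mu> z (x + y) = lift \<mu> z x + lift \<mu> z y"
proof -
  have Bxy: "Bc *\<^sub>v (x + y) = Bc *\<^sub>v x + Bc *\<^sub>v y"
    using Bc_carrier x y by (rule mult_add_distrib_mat_vec)
  have PA: "col_proj Ac (Bc *\<^sub>v x + Bc *\<^sub>v y) = col_proj Ac (Bc *\<^sub>v x) + col_proj Ac (Bc *\<^sub>v y)"
    using Ac_carrier Bc_carrier x y by (intro col_proj_add) auto
  show ?thesis
    unfolding lift_eq[OF add_carrier_vec[OF x y]] lift_eq[OF x] lift_eq[OF y] Bxy PA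
    using Bc_carrier Ac_carrier x y by (intro eq_vecI) (simp_all add: distrib_left)
qed

lemma lift_smult:
  assumes x: "x \<in> carrier_vec n"
  shows "lift \<mu> z (c \<cdot>\<^sub>v x) = c \<cdot>\<^sub>v lift \<mu> z x"
proof -
  have Bx: "Bc *\<^sub>v (c \<cdot>\<^sub>v x) = c \<cdot>\<^sub>v (Bc *\<^sub>v x)"
    using Bc_carrier x by (rule mult_mat_vec)
  have PA: "col_proj Ac (c \<cdot>\<^sub>v (Bc *\<^sub>v x)) = c \<cdot>\<^sub>v col_proj Ac (Bc *\<^sub>v x)"
    using Ac_carrier Bc_carrier x by (intro col_proj_smult) auto
  show ?thesis
    unfolding lift_eq[OF smult_carrier_vec[THEN iffD2, OF x]] lift_eq[OF x] Bx PA
    using Bc_carrier Ac_carrier x by (intro eq_vecI) (simp_all add: algebra_simps)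
qed

lemma lift_into_eigenspace:
  assumes quad: "z^2 + (2 - 4 * \<mu>) * z + 1 = 0"
    and y: "y \<in> carrier_vec n" and Ky: "(Ch * transpose_mat Ch) *\<^sub>v y = \<mu> \<cdot>\<^sub>v y"
  shows "U *\<^sub>v lift \<mu> z y = z \<cdot>\<^sub>v lift \<mu> z y"
    and "transpose_mat Bc *\<^sub>v lift \<mu> z y = (\<mu> * (1 - z)) \<cdot>\<^sub>v y"
proof -
  define x where "x = Bc *\<^sub>v y"
  define p where "p = col_proj Ac x"
  have xc: "x \<in> carrier_vec m" and pc: "p \<in> carrier_vec m"
    unfolding x_def p_def using y Bc_carrier Ac_carrier by auto
  have Btx: "transpose_mat Bc *\<^sub>v x = y" unfolding x_def by (rule Bc_mult_transpose[OF y])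
  have Btp: "transpose_mat Bc *\<^sub>v p = \<mu> \<cdot>\<^sub>v y"
    unfolding p_def x_def using Ky Ch_transpose_Ch_mult_vec[OF y] by simp
  have PBx: "col_proj Bc x = x" unfolding col_proj_def by (simp only: Btx) (simp add: x_def)
  have PBp: "col_proj Bc p = \<mu> \<cdot>\<^sub>v x"
    unfolding col_proj_def Btp x_def using Bc_carrier y by (simp add: mult_mat_vec)
  have PAp: "col_proj Ac p = p" unfolding p_def by (rule col_proj_idem[OF Ac_carrier Ac_orthonormal xc])
  have F: "lift \<mu> z y = (2 * \<mu>) \<cdot>\<^sub>v x + (- (z + 1)) \<cdot>\<^sub>v p"
    unfolding lift_eq[OF y] x_def p_def ..
  have Fc: "lift \<mu> z y \<in> carrier_vec m" unfolding F using xc pc by simp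
  have PBF: "col_proj Bc (lift \<mu> z y) = (2 * \<mu> - (z + 1) * \<mu>) \<cdot>\<^sub>v x"
    unfolding F col_proj_lincomb[OF Bc_carrier xc pc] PBx PBp
    using xc by (intro eq_vecI) (auto simp: algebra_simps)
  have PAF: "col_proj Ac (lift \<mu> z y) = (2 * \<mu> - (z + 1)) \<cdot>\<^sub>v p"
    unfolding F col_proj_lincomb[OF Ac_carrier xc pc] PAp p_def[symmetric]
    using pc by (intro eq_vecI) (auto simp: algebra_simps)
  have PAPBF: "col_proj Ac ((2 * \<mu> - (z + 1) * \<mu>) \<cdot>\<^sub>v x) = (2 * \<mu> - (z + 1) * \<mu>) \<cdot>\<^sub>v p"
    unfolding col_proj_smult[OF Ac_carrier xc] p_def ..
  let ?rhs = "4 \<cdot>\<^sub>v ((2 * \<mu> - (z + 1) * \<mu>) \<cdot>\<^sub>v p) + (-2) \<cdot>\<^sub>v ((2 * \<mu> - (z + 1)) \<cdot>\<^sub>v p)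
      + (-2) \<cdot>\<^sub>v ((2 * \<mu> - (z + 1) * \<mu>) \<cdot>\<^sub>v x) + lift \<mu> z y"
  have "U *\<^sub>v lift \<mu> z y = ?rhs"
    unfolding U_mult_vec[OF Fc] PBF PAF PAPBF ..
  also have "\<dots> = z \<cdot>\<^sub>v lift \<mu> z y"
  proof (rule eq_vecI)
    fix i assume "i < dim_vec (z \<cdot>\<^sub>v lift \<mu> z y)"
    hence i: "i < m" using Fc by simp
    have "?rhs $ i = (z \<cdot>\<^sub>v lift \<mu> z y) $ i + (z^2 + (2 - 4 * \<mu>) * z + 1) * p $ i"
      unfolding F using i xc pc by (simp add: algebra_simps power2_eq_square)
    thus "?rhs $ i = (z \<cdot>\<^sub>v lift \<mu> z y) $ i" unfolding quad by simp
  qed (use Fc in simp)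
  finally show "U *\<^sub>v lift \<mu> z y = z \<cdot>\<^sub>v lift \<mu> z y" .
  show "transpose_mat Bc *\<^sub>v lift \<mu> z y = (\<mu> * (1 - z)) \<cdot>\<^sub>v y"
    unfolding F using Bc_carrier xc pc y
    by (simp add: mult_add_distrib_mat_vec[of _ n m] mult_mat_vec[of _ n m] Btx Btp)
      (intro eq_vecI; simp add: algebra_simps)
qed

lemma eigenvector_U_proj_A:
  assumes w: "w \<in> carrier_vec m" and Uw: "U *\<^sub>v w = z \<cdot>\<^sub>v w"
  shows "(z + 1) \<cdot>\<^sub>v col_proj Ac w = 2 \<cdot>\<^sub>v col_proj Ac (col_proj Bc w)"
proof -
  define q r s where "q = col_proj Bc w" and "r = col_proj Ac w" and "s = col_proj Ac q"
  have qc: "q \<in> carrier_vec m" and rc: "r \<in> carrier_vec m" and sc: "s \<in> carrier_vec m"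
    unfolding q_def r_def s_def using Ac_carrier Bc_carrier by auto
  have "col_proj Ac (4 \<cdot>\<^sub>v s + (-2) \<cdot>\<^sub>v r + (-2) \<cdot>\<^sub>v q + w) = col_proj Ac (z \<cdot>\<^sub>v w)"
    using U_mult_vec[OF w] Uw unfolding q_def r_def s_def by simp
  hence EA: "4 \<cdot>\<^sub>v s + ((-2) \<cdot>\<^sub>v r + ((-2) \<cdot>\<^sub>v s + r)) = z \<cdot>\<^sub>v r"
    using w qc rc sc Ac_carrier col_proj_idem[OF Ac_carrier Ac_orthonormal] unfolding s_def r_def
    by (simp add: col_proj_add col_proj_smult)
  show ?thesis unfolding r_def[symmetric] q_def[symmetric] s_def[symmetric]
  proof (rule eq_vecI)
    fix i assume "i < dim_vec (2 \<cdot>\<^sub>v s)"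
    hence i: "i < m" using sc by simp
    have "(z + 1) * r $ i = 2 * s $ i"
      using arg_cong[OF EA, of "\<lambda>v. v $ i"] i rc sc by (simp add: algebra_simps)
    thus "((z + 1) \<cdot>\<^sub>v r) $ i = (2 \<cdot>\<^sub>v s) $ i" using i rc sc by simp
  qed (use rc sc in simp)
qed

lemma eigenvector_U_proj_B:
  assumes quad: "z^2 + (2 - 4 * \<mu>) * z + 1 = 0"
    and w: "w \<in> carrier_vec m" and Uw: "U *\<^sub>v w = z \<cdot>\<^sub>v w"
  shows "col_proj Bc (col_proj Ac (col_proj Bc w)) = \<mu> \<cdot>\<^sub>v col_proj Bc w"
proof -
  define q r s where "q = col_proj Bc w" and "r = col_proj Ac w" and "s = col_proj Ac q"
  have z: "z \<noteq> 0" using quad by auto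
  have qc: "q \<in> carrier_vec m" and rc: "r \<in> carrier_vec m" and sc: "s \<in> carrier_vec m"
    unfolding q_def r_def s_def using Ac_carrier Bc_carrier by auto
  have "col_proj Bc (4 \<cdot>\<^sub>v s + (-2) \<cdot>\<^sub>v r + (-2) \<cdot>\<^sub>v q + w) = col_proj Bc (z \<cdot>\<^sub>v w)"
    using U_mult_vec[OF w] Uw unfolding q_def r_def s_def by simp
  hence EB: "4 \<cdot>\<^sub>v col_proj Bc s + ((-2) \<cdot>\<^sub>v col_proj Bc r + ((-2) \<cdot>\<^sub>v q + q)) = z \<cdot>\<^sub>v q"
    using w qc rc sc Bc_carrier col_proj_idem[OF Bc_carrier Bc_orthonormal] unfolding q_def
    by (simp add: col_proj_add col_proj_smult)
  have "col_proj Bc ((z + 1) \<cdot>\<^sub>v r) = col_proj Bc (2 \<cdot>\<^sub>v s)"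
    using eigenvector_U_proj_A[OF w Uw] unfolding r_def s_def q_def by simp
  hence EB': "(z + 1) \<cdot>\<^sub>v col_proj Bc r = 2 \<cdot>\<^sub>v col_proj Bc s"
    using rc sc Bc_carrier by (simp add: col_proj_smult)
  show ?thesis unfolding q_def[symmetric] s_def[symmetric]
  proof (rule eq_vecI)
    fix i assume "i < dim_vec (\<mu> \<cdot>\<^sub>v q)"
    hence i: "i < m" using qc by simp
    define t u where "t = col_proj Bc s $ i" and "u = col_proj Bc r $ i"
    have A: "4 * t - 2 * u - q $ i - z * q $ i = 0"
      using arg_cong[OF EB, of "\<lambda>v. v $ i"] i qc unfolding t_def u_def by (simp add: algebra_simps)
    have B: "(z + 1) * u - 2 * t = 0"
      using arg_cong[OF EB', of "\<lambda>v. v $ i"] i unfolding t_def u_def by simp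
    have "z * (4 * t) - z * (4 * (\<mu> * q $ i))
        = (z + 1) * (4 * t - 2 * u - q $ i - z * q $ i) + 2 * ((z + 1) * u - 2 * t)
          + q $ i * (z^2 + (2 - 4 * \<mu>) * z + 1)"
      by (simp add: algebra_simps power2_eq_square)
    hence "z * (4 * t) = z * (4 * (\<mu> * q $ i))" unfolding A B quad by simp
    hence "t = \<mu> * q $ i" using z by simp
    thus "col_proj Bc s $ i = (\<mu> \<cdot>\<^sub>v q) $ i" unfolding t_def using i qc by simp
  qed (use qc sc Bc_carrier in simp)
qed

text \<open>The inverse of lift on the eigenspace of U; the scalar undoes B^T (lift y) = \<mu> (1 - z) y.\<close>

definition unlift :: "complex \<Rightarrow> complex \<Rightarrow> complex vec \<Rightarrow> complex vec" where
  "unlift \<mu> z w = (- 1 / (\<mu> * (z - 1))) \<cdot>\<^sub>v (transpose_mat Bc *\<^sub>v w)"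

lemma unlift_carrier: "unlift \<mu> z w \<in> carrier_vec n"
  unfolding unlift_def carrier_vec_def using Bc_carrier by simp

lemma Bc_mult_unlift:
  "w \<in> carrier_vec m \<Longrightarrow> Bc *\<^sub>v unlift \<mu> z w = (- 1 / (\<mu> * (z - 1))) \<cdot>\<^sub>v col_proj Bc w"
  unfolding unlift_def col_proj_def using Bc_carrier by (simp add: mult_mat_vec)

lemma unlift_eigenvector:
  assumes quad: "z^2 + (2 - 4 * \<mu>) * z + 1 = 0"
    and w: "w \<in> carrier_vec m" and Uw: "U *\<^sub>v w = z \<cdot>\<^sub>v w"
  shows "(Ch * transpose_mat Ch) *\<^sub>v unlift \<mu> z w = \<mu> \<cdot>\<^sub>v unlift \<mu> z w"
proof -
  define c q s where "c = - 1 / (\<mu> * (z - 1))" and "q = col_proj Bc w" and "s = col_proj Ac q"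
  have qc: "q \<in> carrier_vec m" and sc: "s \<in> carrier_vec m"
    unfolding q_def s_def using Ac_carrier Bc_carrier by auto
  have "transpose_mat Bc *\<^sub>v s = transpose_mat Bc *\<^sub>v col_proj Bc s"
    using transpose_mult_col_proj[OF Bc_carrier Bc_orthonormal sc] ..
  also have "\<dots> = \<mu> \<cdot>\<^sub>v (transpose_mat Bc *\<^sub>v q)"
    unfolding s_def q_def eigenvector_U_proj_B[OF quad w Uw] using Bc_carrier by (simp add: mult_mat_vec)
  also have "transpose_mat Bc *\<^sub>v q = transpose_mat Bc *\<^sub>v w"
    unfolding q_def by (rule transpose_mult_col_proj[OF Bc_carrier Bc_orthonormal w])
  finally have Bts: "transpose_mat Bc *\<^sub>v s = \<mu> \<cdot>\<^sub>v (transpose_mat Bc *\<^sub>v w)" .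
  have "(Ch * transpose_mat Ch) *\<^sub>v unlift \<mu> z w = transpose_mat Bc *\<^sub>v (c \<cdot>\<^sub>v s)"
    unfolding Ch_transpose_Ch_mult_vec[OF unlift_carrier] Bc_mult_unlift[OF w]
      col_proj_smult[OF Ac_carrier col_proj_carrier[OF Bc_carrier]] c_def q_def s_def ..
  also have "\<dots> = \<mu> \<cdot>\<^sub>v unlift \<mu> z w"
    unfolding unlift_def c_def[symmetric] using Bc_carrier sc Bts
    by (simp add: mult_mat_vec smult_smult_assoc mult.commute)
  finally show ?thesis .
qed

lemma lift_unlift:
  assumes quad: "z^2 + (2 - 4 * \<mu>) * z + 1 = 0" and \<mu>: "\<mu> \<noteq> 0" and z1: "z \<noteq> 1"
    and w: "w \<in> carrier_vec m" and Uw: "U *\<^sub>v w = z \<cdot>\<^sub>v w"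
  shows "lift \<mu> z (unlift \<mu> z w) = w"
proof -
  define c q r s where "c = - 1 / (\<mu> * (z - 1))" and "q = col_proj Bc w" and "r = col_proj Ac w"
    and "s = col_proj Ac q"
  have qc: "q \<in> carrier_vec m" and rc: "r \<in> carrier_vec m" and sc: "s \<in> carrier_vec m"
    unfolding q_def r_def s_def using Ac_carrier Bc_carrier by auto
  have z1': "z + 1 \<noteq> 0"
  proof
    assume "z + 1 = 0"
    hence "z = -1" by (simp add: eq_neg_iff_add_eq_0)
    thus False using quad \<mu> by simp
  qed
  have lift: "lift \<mu> z (unlift \<mu> z w) = (2 * \<mu>) \<cdot>\<^sub>v (c \<cdot>\<^sub>v q) + (- (z + 1)) \<cdot>\<^sub>v (c \<cdot>\<^sub>v s)"
    unfolding lift_eq[OF unlift_carrier] Bc_mult_unlift[OF w] c_def[symmetric] q_def[symmetric]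
      col_proj_smult[OF Ac_carrier qc] s_def[symmetric] ..
  show ?thesis unfolding lift
  proof (rule eq_vecI)
    fix i assume "i < dim_vec w"
    hence i: "i < m" using w by simp
    have E: "4 * s $ i - 2 * r $ i - 2 * q $ i + w $ i - z * w $ i = 0"
      using arg_cong[OF U_mult_vec[OF w], of "\<lambda>v. v $ i"] Uw i w qc rc sc
      unfolding q_def r_def s_def by (simp add: algebra_simps)
    have R: "(z + 1) * r $ i - 2 * s $ i = 0"
      using arg_cong[OF eigenvector_U_proj_A[OF w Uw], of "\<lambda>v. v $ i"] i rc sc
      unfolding r_def s_def q_def by simp
    have "(z + 1) * (\<mu> * (z - 1) * w $ i - ((z + 1) * s $ i - 2 * \<mu> * q $ i))
        = - \<mu> * (z + 1) * (4 * s $ i - 2 * r $ i - 2 * q $ i + w $ i - z * w $ i)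
          - s $ i * (z^2 + (2 - 4 * \<mu>) * z + 1) - 2 * \<mu> * ((z + 1) * r $ i - 2 * s $ i)"
      by (simp add: algebra_simps power2_eq_square)
    hence "\<mu> * (z - 1) * w $ i = (z + 1) * s $ i - 2 * \<mu> * q $ i"
      unfolding E R quad using z1' by simp
    hence "w $ i = c * (2 * \<mu> * q $ i - (z + 1) * s $ i)"
      unfolding c_def using \<mu> z1 by (simp add: field_simps)
    thus "((2 * \<mu>) \<cdot>\<^sub>v (c \<cdot>\<^sub>v q) + (- (z + 1)) \<cdot>\<^sub>v (c \<cdot>\<^sub>v s)) $ i = w $ i"
      using i qc sc by (simp add: algebra_simps)
  qed (use w qc sc in simp)
qed

lemma eigenspace_U_subset_lift_image:
  assumes quad: "z^2 + (2 - 4 * \<mu>) * z + 1 = 0" and \<mu>: "\<mu> \<noteq> 0" and z1: "z \<noteq> 1"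
    and w: "w \<in> eigenspace U z"
  shows "w \<in> lift \<mu> z ` eigenspace (Ch * transpose_mat Ch) \<mu>"
proof -
  from w have wc: "w \<in> carrier_vec m" and Uw: "U *\<^sub>v w = z \<cdot>\<^sub>v w"
    unfolding eigenspace_def using U_carrier by auto
  have "unlift \<mu> z w \<in> eigenspace (Ch * transpose_mat Ch) \<mu>"
    unfolding eigenspace_def using unlift_carrier unlift_eigenvector[OF quad wc Uw] Ch_carrier by simp
  thus ?thesis using lift_unlift[OF quad \<mu> z1 wc Uw] by (metis image_eqI)
qed

lemma bij_betw_lift_eigenspaces:
  assumes quad: "z^2 + (2 - 4 * \<mu>) * z + 1 = 0" and \<mu>: "\<mu> \<noteq> 0" and z1: "z \<noteq> 1"
  shows "bij_betw (lift \<mu> z) (eigenspace (Ch * transpose_mat Ch) \<mu>) (eigenspace U z)"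
proof -
  have K: "y \<in> eigenspace (Ch * transpose_mat Ch) \<mu> \<longleftrightarrow>
      y \<in> carrier_vec n \<and> (Ch * transpose_mat Ch) *\<^sub>v y = \<mu> \<cdot>\<^sub>v y" for y
    unfolding eigenspace_def using Ch_carrier by auto
  have "lift \<mu> z y \<in> eigenspace U z" if "y \<in> eigenspace (Ch * transpose_mat Ch) \<mu>" for y
  proof -
    from that have y: "y \<in> carrier_vec n" and Ky: "(Ch * transpose_mat Ch) *\<^sub>v y = \<mu> \<cdot>\<^sub>v y"
      unfolding K by auto
    have "lift \<mu> z y \<in> carrier_vec m" using lift_carrier[OF y] .
    thus ?thesis unfolding eigenspace_def using lift_into_eigenspace(1)[OF quad y Ky] U_carrier by simp
  qed
  moreover have "inj_on (lift \<mu> z) (eigenspace (Ch * transpose_mat Ch) \<mu>)"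
  proof (rule inj_onI)
    fix y1 y2 assume y1: "y1 \<in> eigenspace (Ch * transpose_mat Ch) \<mu>"
      and y2: "y2 \<in> eigenspace (Ch * transpose_mat Ch) \<mu>" and eq: "lift \<mu> z y1 = lift \<mu> z y2"
    from y1 y2 have "y1 \<in> carrier_vec n" "(Ch * transpose_mat Ch) *\<^sub>v y1 = \<mu> \<cdot>\<^sub>v y1"
      "y2 \<in> carrier_vec n" "(Ch * transpose_mat Ch) *\<^sub>v y2 = \<mu> \<cdot>\<^sub>v y2" unfolding K by auto
    hence "(\<mu> * (1 - z)) \<cdot>\<^sub>v y1 = (\<mu> * (1 - z)) \<cdot>\<^sub>v y2"
      using lift_into_eigenspace(2)[OF quad] eq by metis
    hence "(1 / (\<mu> * (1 - z))) \<cdot>\<^sub>v ((\<mu> * (1 - z)) \<cdot>\<^sub>v y1) = (1 / (\<mu> * (1 - z))) \<cdot>\<^sub>v ((\<mu> * (1 - z)) \<cdot>\<^sub>v y2)"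
      by simp
    thus "y1 = y2" using \<mu> z1 by (simp add: smult_smult_assoc)
  qed
  ultimately show ?thesis
    unfolding bij_betw_def using eigenspace_U_subset_lift_image[OF quad \<mu> z1] by blast
qed

lemma kernel_dim_char_U:
  assumes quad: "z^2 + (2 - 4 * \<mu>) * z + 1 = 0" and \<mu>: "\<mu> \<noteq> 0" and z1: "z \<noteq> 1"
  shows "kernel_dim (char_matrix U z) = kernel_dim (char_matrix (transpose_mat Ch * Ch) \<mu>)"
proof -
  have KC: "Ch * transpose_mat Ch \<in> carrier_mat n n" using Ch_carrier by simp
  have ker: "x \<in> carrier_vec n" if "x \<in> mat_kernel (char_matrix (Ch * transpose_mat Ch) \<mu>)" for x
    using that unfolding mat_kernel_char_matrix[OF KC] by auto
  have "kernel_dim (char_matrix (Ch * transpose_mat Ch) \<mu>) = kernel_dim (char_matrix U z)"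
  proof (rule kernel_dim_eq_by_linear_bij[OF char_matrix_closed[OF KC] char_matrix_closed[OF U_carrier]])
    show "lift \<mu> z (x + y) = lift \<mu> z x + lift \<mu> z y"
      if "x \<in> mat_kernel (char_matrix (Ch * transpose_mat Ch) \<mu>)"
        "y \<in> mat_kernel (char_matrix (Ch * transpose_mat Ch) \<mu>)" for x y
      using lift_add[OF ker[OF that(1)] ker[OF that(2)]] .
    show "lift \<mu> z (c \<cdot>\<^sub>v x) = c \<cdot>\<^sub>v lift \<mu> z x"
      if "x \<in> mat_kernel (char_matrix (Ch * transpose_mat Ch) \<mu>)" for c x
      using lift_smult[OF ker[OF that]] .
    show "bij_betw (lift \<mu> z) (mat_kernel (char_matrix (Ch * transpose_mat Ch) \<mu>)) (mat_kernel (char_matrix U z))"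
      using bij_betw_lift_eigenspaces[OF quad \<mu> z1]
      unfolding eigenspace_eq_mat_kernel[OF KC] eigenspace_eq_mat_kernel[OF U_carrier] .
  qed
  thus ?thesis using kernel_dim_char_matrix_mult_transpose_comm[OF Ch_carrier \<mu>] by simp
qed

lemma transpose_U_mult_U_vec: "v \<in> carrier_vec m \<Longrightarrow> transpose_mat U *\<^sub>v (U *\<^sub>v v) = v"
  using U_carrier transpose_U_mult_U by (simp flip: assoc_mult_mat_vec[of _ m m _ m])

lemma eigenvalue_U_unit:
  assumes "eigenvalue U z"
  shows "z * cnj z = 1"
proof -
  from assms obtain v where v: "v \<in> carrier_vec m" "v \<noteq> 0\<^sub>v m" "U *\<^sub>v v = z \<cdot>\<^sub>v v"
    unfolding eigenvalue_def eigenvector_def using U_carrier by auto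
  have Uvc: "U *\<^sub>v v \<in> carrier_vec m" using U_carrier v(1) by simp
  have "(U *\<^sub>v v) \<bullet>c (U *\<^sub>v v) = v \<bullet>c v" using U_adjoint[OF v(1) Uvc] transpose_U_mult_U_vec[OF v(1)] by simp
  moreover have "(U *\<^sub>v v) \<bullet>c (U *\<^sub>v v) = z * cnj z * (v \<bullet>c v)"
    unfolding v(3) using v(1) by (simp add: cscalar_prod_smult_left cscalar_prod_smult_right)
  moreover have "v \<bullet>c v \<noteq> 0" using conjugate_square_eq_0_vec[OF v(1)] v(2) by simp
  ultimately show ?thesis by simp
qed

lemma transpose_U_eigenvector:
  assumes z: "z * cnj z = 1" and v: "v \<in> carrier_vec m" and Uv: "U *\<^sub>v v = z \<cdot>\<^sub>v v"
  shows "transpose_mat U *\<^sub>v v = cnj z \<cdot>\<^sub>v v"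
proof -
  have "v = z \<cdot>\<^sub>v (transpose_mat U *\<^sub>v v)"
    using transpose_U_mult_U_vec[OF v] U_carrier v unfolding Uv by (simp add: mult_mat_vec)
  hence "cnj z \<cdot>\<^sub>v v = (cnj z * z) \<cdot>\<^sub>v (transpose_mat U *\<^sub>v v)"
    by (metis smult_smult_assoc)
  thus ?thesis using z by (simp add: mult.commute)
qed

lemma eig_mult_U:
  assumes "eigenvalue U z"
  shows "eig_mult U z = kernel_dim (char_matrix U z)"
  unfolding eig_mult_def
  using order_char_poly_eq_kernel_dim[OF U_carrier mat_kernel_char_matrix_square[OF U_carrier U_adjoint]]
    transpose_U_eigenvector[OF eigenvalue_U_unit[OF assms]] by blast

lemma CtC_carrier: "transpose_mat Ch * Ch \<in> carrier_mat f f"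
  using Ch_carrier by auto

lemma CtC_eq: "transpose_mat Ch * Ch = cmat (transpose_mat BtA * BtA)"
  using cmat_mult[of "transpose_mat BtA" f n "BtA" f]
    A_carrier B_carrier by (simp add: cmat_transpose)

lemma order_char_poly_CtC:
  "Polynomial.order (complex_of_real r) (char_poly (transpose_mat Ch * Ch))
     = kernel_dim (char_matrix (transpose_mat Ch * Ch) (complex_of_real r))"
proof -
  note X = gram_carrier
  have sym: "transpose_mat (transpose_mat BtA * BtA) = transpose_mat BtA * BtA"
    using transpose_mult[of "transpose_mat BtA" f n BtA f] BtA_carrier by simp
  note KC = CtC_carrier
  have adj: "((transpose_mat Ch * Ch) *\<^sub>v v) \<bullet>c w = v \<bullet>c ((transpose_mat Ch * Ch) *\<^sub>v w)"
    if "v \<in> carrier_vec f" "w \<in> carrier_vec f" for v w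
    unfolding CtC_eq using cscalar_prod_map_of_real_adjoint[OF X that] sym by (simp add: cmat_def)
  show ?thesis
    by (rule order_char_poly_eq_kernel_dim[OF KC mat_kernel_char_matrix_square[OF KC adj]])
      simp_all
qed

lemma kernel_dim_char_CtC:
  "kernel_dim (char_matrix (transpose_mat Ch * Ch) (complex_of_real r))
     = kernel_dim (char_matrix (transpose_mat BtA * BtA) r)"
proof -
  note X = gram_carrier
  have "char_matrix (transpose_mat Ch * Ch) (complex_of_real r)
      = cmat (char_matrix (transpose_mat BtA * BtA) r)"
    unfolding CtC_eq cmat_char_matrix[OF X] ..
  thus ?thesis using kernel_dim_map_of_real[OF char_matrix_closed[OF X]] unfolding cmat_def by simp
qed

lemma kernel_dim_char_CtC_0:
  "kernel_dim (char_matrix (transpose_mat Ch * Ch) 0) = kernel_dim BtA"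
proof -
  note X = BtA_carrier
  have "char_matrix (transpose_mat BtA * BtA) 0 = transpose_mat BtA * BtA"
    unfolding char_matrix_def using X by (intro eq_matI) auto
  hence "kernel_dim (char_matrix (transpose_mat Ch * Ch) 0) = kernel_dim (transpose_mat BtA * BtA)"
    using kernel_dim_char_CtC[of 0] by simp
  also have "\<dots> = kernel_dim BtA"
    using mat_kernel_transpose_mult_self[OF X] X by (intro kernel_dim_cong) auto
  finally show ?thesis .
qed

lemma nonreal_eigenvalue_U:
  assumes ev: "eigenvalue U z" and im: "Im z \<noteq> 0"
  defines "r \<equiv> (1 + Re z) / 2"
  shows "0 < r" "r < 1" "eigenvalue (transpose_mat Ch * Ch) (complex_of_real r)"
    and "eig_mult U z = Polynomial.order (complex_of_real r) (char_poly (transpose_mat Ch * Ch))"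
proof -
  have u: "z * cnj z = 1" by (rule eigenvalue_U_unit[OF ev])
  have "Im z ^ 2 > 0" using im by simp
  hence "Re z ^ 2 < 1" using unit_Re_Im[OF u] by linarith
  hence "\<bar>Re z\<bar> < 1" by (simp add: abs_square_less_1)
  thus r: "0 < r" "r < 1" unfolding r_def by auto
  have z1: "z \<noteq> 1" using im by auto
  have dim: "kernel_dim (char_matrix U z) = kernel_dim (char_matrix (transpose_mat Ch * Ch) (complex_of_real r))"
    by (rule kernel_dim_char_U[OF unit_quadratic[OF u, folded r_def] _ z1]) (use r in simp)
  show "eigenvalue (transpose_mat Ch * Ch) (complex_of_real r)"
    using ev dim eigenvalue_iff_kernel_dim_pos[OF U_carrier] eigenvalue_iff_kernel_dim_pos[OF CtC_carrier]
    by simp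
  show "eig_mult U z = Polynomial.order (complex_of_real r) (char_poly (transpose_mat Ch * Ch))"
    unfolding eig_mult_U[OF ev] dim order_char_poly_CtC ..
qed

lemma eigenvalue_CtC_in_unit_interval:
  assumes ev: "eigenvalue (transpose_mat Ch * Ch) \<mu>" and \<mu>0: "\<mu> \<noteq> 0" and \<mu>1: "\<mu> \<noteq> 1"
  obtains r where "\<mu> = complex_of_real r" "0 < r" "r < 1"
proof -
  define z where "z = (- (2 - 4 * \<mu>) + csqrt ((2 - 4 * \<mu>)^2 - 4)) / 2"
  have quad: "z^2 + (2 - 4 * \<mu>) * z + 1 = 0" unfolding z_def by (rule quadratic_csqrt_root)
  have z1: "z \<noteq> 1"
  proof
    assume "z = 1"
    with quad have "4 - 4 * \<mu> = 0" by (simp add: algebra_simps)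
    thus False using \<mu>1 by simp
  qed
  have "eigenvalue U z"
    using kernel_dim_char_U[OF quad \<mu>0 z1] ev eigenvalue_iff_kernel_dim_pos[OF U_carrier]
      eigenvalue_iff_kernel_dim_pos[OF CtC_carrier] by simp
  hence u: "z * cnj z = 1" by (rule eigenvalue_U_unit)
  have "4 * \<mu> * (z * cnj z) = (z^2 + 2 * z + 1) * cnj z"
    using quad by (simp add: algebra_simps power2_eq_square)
  also have "\<dots> = z * (z * cnj z) + 2 * (z * cnj z) + cnj z" by (simp add: power2_eq_square algebra_simps)
  finally have "4 * \<mu> = z + cnj z + 2" using u by simp
  hence "\<mu> = (z + cnj z + 2) / 4" by (simp add: eq_divide_eq mult.commute)
  also have "\<dots> = complex_of_real ((1 + Re z) / 2)" by (simp add: complex_eq_iff)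
  finally have \<mu>: "\<mu> = complex_of_real ((1 + Re z) / 2)" .
  have "Re z ^ 2 \<le> 1" using unit_Re_Im[OF u] zero_le_power2[of "Im z"] by linarith
  hence "\<bar>Re z\<bar> \<le> 1" by (simp add: abs_square_le_1)
  moreover have "(1 + Re z) / 2 \<noteq> 0" using \<mu> \<mu>0 by (metis of_real_0)
  moreover have "(1 + Re z) / 2 \<noteq> 1" using \<mu> \<mu>1 by (metis of_real_1)
  ultimately show ?thesis using that[OF \<mu>] by auto
qed

lemma eigenvalue_U_cis:
  assumes ev: "eigenvalue (transpose_mat Ch * Ch) (complex_of_real r)" and r: "0 < r" "r < 1"
    and \<theta>: "cos \<theta> = 2 * r - 1"
  shows "eigenvalue U (cis \<theta>)"
proof -
  have "cis \<theta> \<noteq> 1" using \<theta> r by (auto simp: complex_eq_iff)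
  thus ?thesis
    using kernel_dim_char_U[OF cis_quadratic[OF \<theta>]] ev r eigenvalue_iff_kernel_dim_pos[OF U_carrier]
      eigenvalue_iff_kernel_dim_pos[OF CtC_carrier] by simp
qed

lemma cis_sign_arccos_eigenvalue_U:
  assumes \<sigma>: "\<sigma> = 1 \<or> \<sigma> = -1"
    and ev: "eigenvalue (transpose_mat Ch * Ch) \<mu>" and "\<mu> \<noteq> 0" "\<mu> \<noteq> 1"
  shows "eigenvalue U (cis (\<sigma> * arccos (2 * Re \<mu> - 1)))"
    and "0 < \<sigma> * Im (cis (\<sigma> * arccos (2 * Re \<mu> - 1)))"
proof -
  obtain r where r: "\<mu> = complex_of_real r" "0 < r" "r < 1"
    using ev assms(3,4) by (rule eigenvalue_CtC_in_unit_interval)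
  have x: "- 1 < 2 * r - 1" "2 * r - 1 < 1" using r by auto
  have "cos (\<sigma> * arccos (2 * r - 1)) = 2 * r - 1"
    using x by (simp add: cos_sign_mult[OF \<sigma>] cos_arccos)
  hence "eigenvalue U (cis (\<sigma> * arccos (2 * r - 1)))"
    by (rule eigenvalue_U_cis[OF ev[unfolded r(1)] r(2,3)])
  thus "eigenvalue U (cis (\<sigma> * arccos (2 * Re \<mu> - 1)))" using r(1) by simp
  show "0 < \<sigma> * Im (cis (\<sigma> * arccos (2 * Re \<mu> - 1)))"
    using sign_mult_Im_cis_arccos_pos[OF \<sigma> x] r(1) by simp
qed

lemma bij_betw_nonreal_eigenvalues_U:
  assumes \<sigma>: "\<sigma> = 1 \<or> \<sigma> = -1"
  shows "bij_betw (\<lambda>z. complex_of_real ((1 + Re z) / 2))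
           {z. eigenvalue U z \<and> 0 < \<sigma> * Im z}
           {\<mu>. eigenvalue (transpose_mat Ch * Ch) \<mu> \<and> \<mu> \<noteq> 0 \<and> \<mu> \<noteq> 1}"
proof (rule bij_betw_byWitness[where f' = "\<lambda>\<mu>. cis (\<sigma> * arccos (2 * Re \<mu> - 1))"])
  show "\<forall>z\<in>{z. eigenvalue U z \<and> 0 < \<sigma> * Im z}.
      cis (\<sigma> * arccos (2 * Re (complex_of_real ((1 + Re z) / 2)) - 1)) = z"
  proof
    fix z assume "z \<in> {z. eigenvalue U z \<and> 0 < \<sigma> * Im z}"
    hence ev: "eigenvalue U z" and im: "0 < \<sigma> * Im z" by auto
    have "2 * Re (complex_of_real ((1 + Re z) / 2)) - 1 = Re z" by (simp add: field_simps)
    thus "cis (\<sigma> * arccos (2 * Re (complex_of_real ((1 + Re z) / 2)) - 1)) = z"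
      using cis_sign_mult_arccos_Re[OF eigenvalue_U_unit[OF ev] \<sigma> im] by simp
  qed
  show "\<forall>\<mu>\<in>{\<mu>. eigenvalue (transpose_mat Ch * Ch) \<mu> \<and> \<mu> \<noteq> 0 \<and> \<mu> \<noteq> 1}.
      complex_of_real ((1 + Re (cis (\<sigma> * arccos (2 * Re \<mu> - 1)))) / 2) = \<mu>"
  proof
    fix \<mu> assume "\<mu> \<in> {\<mu>. eigenvalue (transpose_mat Ch * Ch) \<mu> \<and> \<mu> \<noteq> 0 \<and> \<mu> \<noteq> 1}"
    hence "eigenvalue (transpose_mat Ch * Ch) \<mu>" "\<mu> \<noteq> 0" "\<mu> \<noteq> 1" by auto
    then obtain r where r: "\<mu> = complex_of_real r" "0 < r" "r < 1"
      by (rule eigenvalue_CtC_in_unit_interval)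
    have "Re (cis (\<sigma> * arccos (2 * Re \<mu> - 1))) = 2 * r - 1"
      using r by (simp add: cos_sign_mult[OF \<sigma>] cos_arccos)
    thus "complex_of_real ((1 + Re (cis (\<sigma> * arccos (2 * Re \<mu> - 1)))) / 2) = \<mu>"
      using r(1) by simp
  qed
  show "(\<lambda>z. complex_of_real ((1 + Re z) / 2)) ` {z. eigenvalue U z \<and> 0 < \<sigma> * Im z}
      \<subseteq> {\<mu>. eigenvalue (transpose_mat Ch * Ch) \<mu> \<and> \<mu> \<noteq> 0 \<and> \<mu> \<noteq> 1}"
  proof (rule image_subsetI)
    fix z assume "z \<in> {z. eigenvalue U z \<and> 0 < \<sigma> * Im z}"
    hence ev: "eigenvalue U z" and "Im z \<noteq> 0" by auto
    note r = nonreal_eigenvalue_U[OF this]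
    have "complex_of_real ((1 + Re z) / 2) \<noteq> 0" "complex_of_real ((1 + Re z) / 2) \<noteq> 1"
      using r(1,2) by (simp_all only: of_real_eq_0_iff of_real_eq_1_iff)
    thus "complex_of_real ((1 + Re z) / 2) \<in> {\<mu>. eigenvalue (transpose_mat Ch * Ch) \<mu> \<and> \<mu> \<noteq> 0 \<and> \<mu> \<noteq> 1}"
      using r(3) by simp
  qed
  show "(\<lambda>\<mu>. cis (\<sigma> * arccos (2 * Re \<mu> - 1))) ` {\<mu>. eigenvalue (transpose_mat Ch * Ch) \<mu> \<and> \<mu> \<noteq> 0 \<and> \<mu> \<noteq> 1}
      \<subseteq> {z. eigenvalue U z \<and> 0 < \<sigma> * Im z}"
    using cis_sign_arccos_eigenvalue_U[OF \<sigma>] by blast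
qed

lemma sum_order_char_poly_CtC:
  "f = (\<Sum>\<mu>\<in>{\<mu>. eigenvalue (transpose_mat Ch * Ch) \<mu> \<and> \<mu> \<noteq> 0 \<and> \<mu> \<noteq> 1}.
          Polynomial.order \<mu> (char_poly (transpose_mat Ch * Ch)))
       + (kernel_dim BtA + kernel_dim (char_matrix (transpose_mat BtA * BtA) 1))"
proof -
  define ord where "ord \<mu> = Polynomial.order \<mu> (char_poly (transpose_mat Ch * Ch))" for \<mu>
  define S where "S = {\<mu>. eigenvalue (transpose_mat Ch * Ch) \<mu> \<and> \<mu> \<noteq> 0 \<and> \<mu> \<noteq> 1}"
  define T where "T = {\<mu>. eigenvalue (transpose_mat Ch * Ch) \<mu>}"
  have finT: "finite T" unfolding T_def by (rule finite_eigenvalues[OF CtC_carrier])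
  have ST: "S \<subseteq> T" and sub: "T \<subseteq> S \<union> {0, 1}" and disj01: "S \<inter> {0, 1} = {}"
    unfolding S_def T_def by auto
  have finS: "finite S" using finite_subset[OF ST finT] .
  have ord0: "ord \<mu> = 0" if "\<mu> \<notin> T" for \<mu>
  proof -
    have "poly (char_poly (transpose_mat Ch * Ch)) \<mu> \<noteq> 0"
      using that eigenvalue_root_char_poly[OF CtC_carrier] unfolding T_def by simp
    thus ?thesis unfolding ord_def by (rule order_0I)
  qed
  have "f = (\<Sum>\<mu>\<in>T. ord \<mu>)"
    unfolding T_def ord_def by (rule sum_order_char_poly_eigenvalues[OF CtC_carrier, symmetric])
  also have "\<dots> = (\<Sum>\<mu>\<in>S \<union> {0, 1}. ord \<mu>)"
    by (rule sum.mono_neutral_left[OF _ sub]) (use finS ord0 in auto)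
  also have "\<dots> = (\<Sum>\<mu>\<in>S. ord \<mu>) + (\<Sum>\<mu>\<in>{0, 1}. ord \<mu>)"
    by (rule sum.union_disjoint[OF finS _ disj01]) simp
  also have "\<dots> = (\<Sum>\<mu>\<in>S. ord \<mu>) + (ord 0 + ord 1)" by simp
  finally have "f = (\<Sum>\<mu>\<in>S. ord \<mu>) + (ord 0 + ord 1)" .
  moreover have "ord 0 = kernel_dim BtA"
    using order_char_poly_CtC[of 0] kernel_dim_char_CtC_0 unfolding ord_def by simp
  moreover have "ord 1 = kernel_dim (char_matrix (transpose_mat BtA * BtA) 1)"
    using order_char_poly_CtC[of 1] kernel_dim_char_CtC[of 1] unfolding ord_def by simp
  ultimately show ?thesis by (simp add: ord_def S_def)
qed

lemma sum_eig_mult_nonreal_U: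
  "(\<Sum>z\<in>{z. eigenvalue U z \<and> Im z \<noteq> 0}. eig_mult U z)
     + 2 * (kernel_dim BtA + kernel_dim (char_matrix (transpose_mat BtA * BtA) 1))
   = 2 * f"
proof -
  define ord where "ord \<mu> = Polynomial.order \<mu> (char_poly (transpose_mat Ch * Ch))" for \<mu>
  define S where "S = {\<mu>. eigenvalue (transpose_mat Ch * Ch) \<mu> \<and> \<mu> \<noteq> 0 \<and> \<mu> \<noteq> 1}"
  define H where "H \<sigma> = {z. eigenvalue U z \<and> 0 < \<sigma> * Im z}" for \<sigma> :: real
  have finU: "finite {z. eigenvalue U z}" by (rule finite_eigenvalues[OF U_carrier])
  have finH: "finite (H \<sigma>)" for \<sigma> unfolding H_def by (rule finite_subset[OF _ finU]) auto
  have half: "(\<Sum>z\<in>H \<sigma>. eig_mult U z) = (\<Sum>\<mu>\<in>S. ord \<mu>)" if "\<sigma> = 1 \<or> \<sigma> = -1" for \<sigma>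
  proof -
    have "(\<Sum>z\<in>H \<sigma>. eig_mult U z) = (\<Sum>z\<in>H \<sigma>. ord (complex_of_real ((1 + Re z) / 2)))"
    proof (rule sum.cong[OF refl])
      fix z assume "z \<in> H \<sigma>"
      hence "eigenvalue U z" "Im z \<noteq> 0" unfolding H_def by auto
      thus "eig_mult U z = ord (complex_of_real ((1 + Re z) / 2))"
        unfolding ord_def by (rule nonreal_eigenvalue_U(4))
    qed
    also have "\<dots> = (\<Sum>\<mu>\<in>S. ord \<mu>)"
      unfolding H_def S_def by (rule sum.reindex_bij_betw[OF bij_betw_nonreal_eigenvalues_U[OF that]])
    finally show ?thesis .
  qed
  have split: "{z. eigenvalue U z \<and> Im z \<noteq> 0} = H 1 \<union> H (-1)" and disj: "H 1 \<inter> H (-1) = {}"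
    unfolding H_def by auto
  have "(\<Sum>z\<in>{z. eigenvalue U z \<and> Im z \<noteq> 0}. eig_mult U z)
      = (\<Sum>z\<in>H 1. eig_mult U z) + (\<Sum>z\<in>H (-1). eig_mult U z)"
    unfolding split by (rule sum.union_disjoint[OF finH finH disj])
  also have "\<dots> = 2 * (\<Sum>\<mu>\<in>S. ord \<mu>)" using half[of 1] half[of "-1"] by simp
  finally show ?thesis using sum_order_char_poly_CtC unfolding ord_def S_def by simp
qed

end

section \<open>Circular embeddings\<close>

locale circular_embedding =
  fixes V :: "'v set" and E :: "'v \<Rightarrow> 'v \<Rightarrow> bool" and \<rho> :: "'v \<times> 'v \<Rightarrow> 'v \<times> 'v"
    and as :: "('v \<times> 'v) list" and vs :: "'v list" and fs :: "('v \<times> 'v) set list"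
  assumes graph: "simple_graph V E" and conn: "connected_graph V E"
    and rot: "rotation_system E \<rho>" and circ: "circular E \<rho>"
    and as_dist: "distinct as" and as_set: "set as = arcs E"
    and vs_dist: "distinct vs" and vs_set: "set vs = V"
    and fs_dist: "distinct fs" and fs_set: "set fs = faces E \<rho>"
begin

abbreviation "fnext \<equiv> face_next \<rho>"

lemma finite_arcs: "finite (arcs E)" using as_set by (metis List.finite_set)

lemma arc_swap: "a \<in> arcs E \<Longrightarrow> (snd a, fst a) \<in> arcs E"
  using graph unfolding arcs_def simple_graph_def by auto

lemma arc_in_V: "a \<in> arcs E \<Longrightarrow> fst a \<in> V \<and> snd a \<in> V"
  using graph unfolding arcs_def simple_graph_def by auto

lemma rho_arcs: "a \<in> arcs E \<Longrightarrow> \<rho> a \<in> arcs E" and rho_fst: "a \<in> arcs E \<Longrightarrow> fst (\<rho> a) = fst a"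
  and rho_inj: "inj_on \<rho> (arcs E)"
  using rot unfolding rotation_system_def bij_betw_def by auto

lemma fnext_arcs: "a \<in> arcs E \<Longrightarrow> fnext a \<in> arcs E"
  unfolding face_next_def using rho_arcs arc_swap by auto

lemma fst_fnext: "a \<in> arcs E \<Longrightarrow> fst (fnext a) = snd a"
  unfolding face_next_def using rho_fst arc_swap by fastforce

lemma inj_on_fnext: "inj_on fnext (arcs E)"
proof (rule inj_onI)
  fix a b assume a: "a \<in> arcs E" and b: "b \<in> arcs E" and eq: "fnext a = fnext b"
  hence "(snd a, fst a) = (snd b, fst b)"
    using rho_inj arc_swap unfolding face_next_def inj_on_def by blast
  thus "a = b" by (simp add: prod_eq_iff)
qed

lemma funpow_fnext_arcs: "a \<in> arcs E \<Longrightarrow> (fnext ^^ k) a \<in> arcs E"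
  by (induct k) (auto simp: fnext_arcs)

lemma funpow_fnext_cancel: "a \<in> arcs E \<Longrightarrow> (fnext ^^ i) a = (fnext ^^ (i + d)) a \<Longrightarrow> a = (fnext ^^ d) a"
proof (induct i)
  case (Suc i)
  have "fnext ((fnext ^^ i) a) = fnext ((fnext ^^ (i + d)) a)" using Suc(3) by simp
  hence "(fnext ^^ i) a = (fnext ^^ (i + d)) a"
    using inj_on_fnext funpow_fnext_arcs[OF Suc(2)] unfolding inj_on_def by blast
  thus ?case using Suc by simp
qed simp

lemma funpow_fnext_period: assumes a: "a \<in> arcs E" shows "\<exists>p>0. (fnext ^^ p) a = a"
proof -
  define N where "N = card (arcs E)"
  let ?g = "\<lambda>k. (fnext ^^ k) a"
  have "?g ` {0..N} \<subseteq> arcs E" using funpow_fnext_arcs[OF a] by auto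
  hence "card (?g ` {0..N}) \<le> N" unfolding N_def using finite_arcs card_mono by blast
  hence "\<not> inj_on ?g {0..N}" using card_image[of ?g "{0..N}"] by auto
  then obtain i j where ij: "i \<in> {0..N}" "j \<in> {0..N}" "i \<noteq> j" "?g i = ?g j"
    unfolding inj_on_def by blast
  show ?thesis
  proof (cases "i < j")
    case True
    with ij funpow_fnext_cancel[OF a, of i "j - i"] show ?thesis by (intro exI[of _ "j - i"]) auto
  next
    case False
    with ij funpow_fnext_cancel[OF a, of j "i - j"] show ?thesis by (intro exI[of _ "i - j"]) auto
  qed
qed

lemma face_of_subset_arcs: "a \<in> arcs E \<Longrightarrow> face_of \<rho> a \<subseteq> arcs E"
  unfolding face_of_def using funpow_fnext_arcs[of a] by blast

lemma face_of_self: "a \<in> face_of \<rho> a"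
  unfolding face_of_def by (auto intro: exI[of _ 0])

lemma fnext_face_of: assumes "b \<in> face_of \<rho> a" shows "fnext b \<in> face_of \<rho> a"
proof -
  from assms obtain k where "b = (fnext ^^ k) a" unfolding face_of_def by auto
  hence "fnext b = (fnext ^^ (Suc k)) a" by simp
  thus ?thesis unfolding face_of_def by blast
qed

lemma face_of_eq: assumes a: "a \<in> arcs E" and b: "b \<in> face_of \<rho> a"
  shows "face_of \<rho> b = face_of \<rho> a"
proof -
  from b obtain k where bk: "b = (fnext ^^ k) a" unfolding face_of_def by auto
  from funpow_fnext_period[OF a] obtain p where p: "p > 0" "(fnext ^^ p) a = a" by auto
  have pk: "(fnext ^^ (p * k)) a = a" for k
    by (induct k) (auto simp: funpow_add p(2) simp del: funpow.simps(2) simp: funpow.simps(1) )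
  have "a = (fnext ^^ (p * k - k)) b"
  proof -
    have "p * k \<ge> k" using p by simp
    have "(fnext ^^ (p * k - k)) b = (fnext ^^ (p * k - k + k)) a" unfolding bk
      by (simp only: funpow_add o_apply)
    also have "p * k - k + k = p * k" using \<open>p * k \<ge> k\<close> by simp
    finally show ?thesis using pk by simp
  qed
  show ?thesis
  proof
    show "face_of \<rho> b \<subseteq> face_of \<rho> a"
    proof
      fix x assume "x \<in> face_of \<rho> b"
      then obtain j where "x = (fnext ^^ j) b" unfolding face_of_def by auto
      hence "x = (fnext ^^ (j + k)) a" unfolding bk by (simp only: funpow_add o_apply)
      thus "x \<in> face_of \<rho> a" unfolding face_of_def by blast
    qed
    show "face_of \<rho> a \<subseteq> face_of \<rho> b"
    proof
      fix x assume "x \<in> face_of \<rho> a"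
      then obtain j where "x = (fnext ^^ j) a" unfolding face_of_def by auto
      hence "x = (fnext ^^ (j + (p * k - k))) b" using \<open>a = _\<close> by (simp only: funpow_add o_apply)
      thus "x \<in> face_of \<rho> b" unfolding face_of_def by blast
    qed
  qed
qed

lemma faces_obtain_arc: "f \<in> faces E \<rho> \<Longrightarrow> \<exists>a\<in>arcs E. f = face_of \<rho> a"
  unfolding faces_def by auto

lemma faces_subset_arcs: "f \<in> faces E \<rho> \<Longrightarrow> f \<subseteq> arcs E"
  using faces_obtain_arc face_of_subset_arcs by blast

lemma faces_disjoint: assumes f: "f \<in> faces E \<rho>" and g: "g \<in> faces E \<rho>" and b: "b \<in> f" "b \<in> g"
  shows "f = g"
proof -
  from faces_obtain_arc[OF f] obtain a1 where a1: "a1 \<in> arcs E" "f = face_of \<rho> a1" by auto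
  from faces_obtain_arc[OF g] obtain a2 where a2: "a2 \<in> arcs E" "g = face_of \<rho> a2" by auto
  show ?thesis using face_of_eq[OF a1(1), of b] face_of_eq[OF a2(1), of b] a1 a2 b by simp
qed

abbreviation "nA \<equiv> length as"
abbreviation "nV \<equiv> length vs"
abbreviation "nF \<equiv> length fs"

definition face_idx :: "'v \<times> 'v \<Rightarrow> nat" where "face_idx a = (THE j. j < nF \<and> a \<in> fs ! j)"

lemma face_idx_unique: assumes "j < nF" "a \<in> fs ! j" "j' < nF" "a \<in> fs ! j'" shows "j = j'"
proof -
  have "fs ! j \<in> faces E \<rho>" "fs ! j' \<in> faces E \<rho>" using assms fs_set nth_mem by blast+
  hence "fs ! j = fs ! j'" using faces_disjoint assms by blast
  thus ?thesis using fs_dist assms nth_eq_iff_index_eq by blast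
qed

lemma face_idx: assumes a: "a \<in> arcs E" shows "face_idx a < nF" "a \<in> fs ! face_idx a"
proof -
  have "face_of \<rho> a \<in> set fs" using a fs_set unfolding faces_def by auto
  then obtain j where j: "j < nF" "fs ! j = face_of \<rho> a" by (auto simp: in_set_conv_nth)
  hence ex: "j < nF \<and> a \<in> fs ! j" using face_of_self by simp
  have "face_idx a = j" unfolding face_idx_def
    by (rule the_equality) (use ex in simp, use ex face_idx_unique in blast)
  thus "face_idx a < nF" "a \<in> fs ! face_idx a" using ex by auto
qed

lemma face_idx_eqI: "j < nF \<Longrightarrow> a \<in> fs ! j \<Longrightarrow> face_idx a = j"
  using face_idx face_idx_unique faces_subset_arcs fs_set nth_mem by blast

lemma face_idx_fnext: assumes a: "a \<in> arcs E" shows "face_idx (fnext a) = face_idx a"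
proof -
  have fsf: "fs ! face_idx a \<in> faces E \<rho>" using face_idx[OF a] fs_set nth_mem by blast
  then obtain c where c: "c \<in> arcs E" "fs ! face_idx a = face_of \<rho> c" using faces_obtain_arc by blast
  have "fnext a \<in> fs ! face_idx a" using fnext_face_of face_idx(2)[OF a] c by metis
  thus ?thesis using face_idx_eqI face_idx(1)[OF a] by blast
qed

definition vertex_idx :: "'v \<Rightarrow> nat" where "vertex_idx x = (THE u. u < nV \<and> vs ! u = x)"

lemma vertex_idx: assumes "x \<in> V" shows "vertex_idx x < nV" "vs ! vertex_idx x = x"
proof -
  obtain u where u: "u < nV" "vs ! u = x" using assms vs_set by (auto simp: in_set_conv_nth)
  have "vertex_idx x = u" unfolding vertex_idx_def
    by (rule the_equality) (use u vs_dist nth_eq_iff_index_eq in auto)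
  thus "vertex_idx x < nV" "vs ! vertex_idx x = x" using u by auto
qed

lemma vertex_idx_nth: "u < nV \<Longrightarrow> vertex_idx (vs ! u) = u"
  using vertex_idx[of "vs ! u"] vs_set vs_dist nth_eq_iff_index_eq nth_mem by metis

definition vdeg :: "nat \<Rightarrow> nat" where "vdeg u = card {k. k < nA \<and> fst (as ! k) = vs ! u}"
definition flen :: "nat \<Rightarrow> nat" where "flen j = card {k. k < nA \<and> as ! k \<in> fs ! j}"

lemma exists_arc_from: assumes x: "x \<in> V" shows "\<exists>a\<in>arcs E. fst a = x"
proof -
  obtain a where a: "a \<in> arcs E" using circ unfolding circular_def by auto
  have "(x, fst a) \<in> (arcs E)\<^sup>*" using conn x arc_in_V[OF a] unfolding connected_graph_def by auto
  thus ?thesis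
  proof (cases rule: converse_rtranclE)
    case base thus ?thesis using a by auto
  next
    case (step y) thus ?thesis by (intro bexI[of _ "(x, y)"]) auto
  qed
qed

lemma vdeg_pos: assumes u: "u < nV" shows "vdeg u > 0"
proof -
  have "vs ! u \<in> V" using u vs_set nth_mem by blast
  then obtain a where a: "a \<in> arcs E" "fst a = vs ! u" using exists_arc_from by blast
  then obtain k where k: "k < nA" "as ! k = a" using as_set by (metis in_set_conv_nth)
  have "k \<in> {k. k < nA \<and> fst (as ! k) = vs ! u}" using k a by simp
  thus ?thesis unfolding vdeg_def card_gt_0_iff by auto
qed

lemma flen_pos: assumes j: "j < nF" shows "flen j > 0"
proof -
  have "fs ! j \<in> faces E \<rho>" using j fs_set nth_mem by blast
  then obtain a where a: "a \<in> arcs E" "fs ! j = face_of \<rho> a" using faces_obtain_arc by blast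
  then obtain k where k: "k < nA" "as ! k = a" using as_set by (metis in_set_conv_nth)
  have "k \<in> {k. k < nA \<and> as ! k \<in> fs ! j}" using k a face_of_self by simp
  thus ?thesis unfolding flen_def card_gt_0_iff by auto
qed

lemma card_arcs_from_vertex_in_face: assumes j: "j < nF" and u: "u < nV"
  shows "card {k. k < nA \<and> fst (as ! k) = vs ! u \<and> as ! k \<in> fs ! j} = (if \<exists>a\<in>fs ! j. fst a = vs ! u then 1 else 0)"
proof (cases "\<exists>a\<in>fs ! j. fst a = vs ! u")
  case True
  then obtain a where a: "a \<in> fs ! j" "fst a = vs ! u" by auto
  have fsj: "fs ! j \<in> faces E \<rho>" using j fs_set nth_mem by blast
  hence "a \<in> arcs E" using faces_subset_arcs a by blast
  then obtain k0 where k0: "k0 < nA" "as ! k0 = a" using as_set by (metis in_set_conv_nth)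
  have inj: "inj_on fst (fs ! j)" using circ fsj unfolding circular_def by auto
  have "{k. k < nA \<and> fst (as ! k) = vs ! u \<and> as ! k \<in> fs ! j} = {k0}"
  proof (safe)
    fix k assume k: "k < nA" "fst (as ! k) = vs ! u" "as ! k \<in> fs ! j"
    hence "as ! k = a" using inj a unfolding inj_on_def by auto
    thus "k = k0" using k0 k as_dist nth_eq_iff_index_eq by metis
  qed (use k0 a in auto)
  thus ?thesis using True by simp
next
  case False
  hence "{k. k < nA \<and> fst (as ! k) = vs ! u \<and> as ! k \<in> fs ! j} = {}" by auto
  thus ?thesis using False by simp
qed

abbreviation "Mm \<equiv> arc_face_mat as fs"
abbreviation "Nm \<equiv> arc_tail_mat as vs"
abbreviation "Cm \<equiv> vertex_face_mat vs fs"
abbreviation "Mh \<equiv> normalize_cols Mm"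
abbreviation "Nh \<equiv> normalize_cols Nm"

lemma Mh_carrier: "Mh \<in> carrier_mat nA nF" unfolding normalize_cols_def arc_face_mat_def by simp
lemma Nh_carrier: "Nh \<in> carrier_mat nA nV" unfolding normalize_cols_def arc_tail_mat_def by simp
lemma Cm_carrier: "Cm \<in> carrier_mat nV nF" unfolding vertex_face_mat_def by simp

lemma Mh_entry: assumes "k < nA" "j < nF"
  shows "Mh $$ (k,j) = (if as ! k \<in> fs ! j then 1 else 0) / sqrt (real (flen j))"
proof -
  have "(\<Sum>k'<nA. (Mm $$ (k', j))\<^sup>2) = (\<Sum>k'\<in>{0..<nA}. (if as ! k' \<in> fs ! j then 1 else 0))"
    unfolding atLeast0LessThan using assms by (intro sum.cong) (auto simp: arc_face_mat_def)
  also have "\<dots> = real (flen j)" unfolding sum_indicator flen_def ..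
  finally show ?thesis using assms unfolding normalize_cols_def by (simp add: arc_face_mat_def)
qed

lemma Nh_entry: assumes "k < nA" "u < nV"
  shows "Nh $$ (k,u) = (if fst (as ! k) = vs ! u then 1 else 0) / sqrt (real (vdeg u))"
proof -
  have "(\<Sum>k'<nA. (Nm $$ (k', u))\<^sup>2) = (\<Sum>k'\<in>{0..<nA}. (if fst (as ! k') = vs ! u then 1 else 0))"
    unfolding atLeast0LessThan using assms by (intro sum.cong) (auto simp: arc_tail_mat_def)
  also have "\<dots> = real (vdeg u)" unfolding sum_indicator vdeg_def ..
  finally show ?thesis using assms unfolding normalize_cols_def by (simp add: arc_tail_mat_def)
qed

lemma transpose_mult_entry:
  assumes X: "X \<in> carrier_mat nA c1" and Y: "Y \<in> carrier_mat nA c2" and i: "i < c1" and j: "j < c2"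
  shows "(transpose_mat X * Y) $$ (i,j) = (\<Sum>k\<in>{0..<nA}. X $$ (k,i) * Y $$ (k,j))"
  using X Y i j by (simp add: scalar_prod_def)

lemma Mh_orthonormal: "transpose_mat Mh * Mh = 1\<^sub>m nF"
proof (rule eq_matI)
  fix i j assume "i < dim_row (1\<^sub>m nF)" "j < dim_col (1\<^sub>m nF)"
  hence i: "i < nF" and j: "j < nF" by auto
  have "(transpose_mat Mh * Mh) $$ (i,j) = (\<Sum>k\<in>{0..<nA}. (if as ! k \<in> fs ! i \<and> as ! k \<in> fs ! j then 1 else 0) / (sqrt (real (flen i)) * sqrt (real (flen j))))"
    unfolding transpose_mult_entry[OF Mh_carrier Mh_carrier i j] by (intro sum.cong) (auto simp: Mh_entry i j simp del: of_nat_eq_0_iff)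
  also have "\<dots> = real (card {k. k < nA \<and> as ! k \<in> fs ! i \<and> as ! k \<in> fs ! j}) / (sqrt (real (flen i)) * sqrt (real (flen j)))"
    unfolding sum_divide_distrib[symmetric] sum_indicator ..
  also have "\<dots> = 1\<^sub>m nF $$ (i,j)"
  proof (cases "i = j")
    case True
    have c: "card {k. k < nA \<and> as ! k \<in> fs ! i \<and> as ! k \<in> fs ! j} = flen i" using True unfolding flen_def by simp
    have "real (flen i) > 0" using flen_pos[OF i] by simp
    thus ?thesis unfolding c using True i by (simp del: of_nat_eq_0_iff)
  next
    case False
    have "{k. k < nA \<and> as ! k \<in> fs ! i \<and> as ! k \<in> fs ! j} = {}" using face_idx_unique[OF i _ j] False by blast
    thus ?thesis using False i j by simp
  qed
  finally show "(transpose_mat Mh * Mh) $$ (i,j) = 1\<^sub>m nF $$ (i,j)" .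
qed (use Mh_carrier in auto)

lemma Nh_orthonormal: "transpose_mat Nh * Nh = 1\<^sub>m nV"
proof (rule eq_matI)
  fix i j assume "i < dim_row (1\<^sub>m nV)" "j < dim_col (1\<^sub>m nV)"
  hence i: "i < nV" and j: "j < nV" by auto
  have "(transpose_mat Nh * Nh) $$ (i,j) = (\<Sum>k\<in>{0..<nA}. (if fst (as ! k) = vs ! i \<and> fst (as ! k) = vs ! j then 1 else 0) / (sqrt (real (vdeg i)) * sqrt (real (vdeg j))))"
    unfolding transpose_mult_entry[OF Nh_carrier Nh_carrier i j] by (intro sum.cong) (auto simp: Nh_entry i j simp del: of_nat_eq_0_iff)
  also have "\<dots> = real (card {k. k < nA \<and> fst (as ! k) = vs ! i \<and> fst (as ! k) = vs ! j}) / (sqrt (real (vdeg i)) * sqrt (real (vdeg j)))"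
    unfolding sum_divide_distrib[symmetric] sum_indicator ..
  also have "\<dots> = 1\<^sub>m nV $$ (i,j)"
  proof (cases "i = j")
    case True
    have c: "card {k. k < nA \<and> fst (as ! k) = vs ! i \<and> fst (as ! k) = vs ! j} = vdeg i" using True unfolding vdeg_def by simp
    have "real (vdeg i) > 0" using vdeg_pos[OF i] by simp
    thus ?thesis unfolding c using True i by (simp del: of_nat_eq_0_iff)
  next
    case False
    have "vs ! i \<noteq> vs ! j" using False i j vs_dist nth_eq_iff_index_eq by blast
    hence "{k. k < nA \<and> fst (as ! k) = vs ! i \<and> fst (as ! k) = vs ! j} = {}" by auto
    thus ?thesis using False i j by simp
  qed
  finally show "(transpose_mat Nh * Nh) $$ (i,j) = 1\<^sub>m nV $$ (i,j)" .
qed (use Nh_carrier in auto)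

lemma NtM_entry: assumes u: "u < nV" and j: "j < nF"
  shows "(transpose_mat Nh * Mh) $$ (u,j) = (1 / sqrt (real (vdeg u))) * Cm $$ (u,j) * (1 / sqrt (real (flen j)))"
proof -
  have "(transpose_mat Nh * Mh) $$ (u,j) = (\<Sum>k\<in>{0..<nA}. (if fst (as ! k) = vs ! u \<and> as ! k \<in> fs ! j then 1 else 0) / (sqrt (real (vdeg u)) * sqrt (real (flen j))))"
    unfolding transpose_mult_entry[OF Nh_carrier Mh_carrier u j] by (intro sum.cong) (auto simp: Mh_entry Nh_entry u j simp del: of_nat_eq_0_iff)
  also have "\<dots> = real (card {k. k < nA \<and> fst (as ! k) = vs ! u \<and> as ! k \<in> fs ! j}) / (sqrt (real (vdeg u)) * sqrt (real (flen j)))"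
    unfolding sum_divide_distrib[symmetric] sum_indicator ..
  also have "\<dots> = (1 / sqrt (real (vdeg u))) * Cm $$ (u,j) * (1 / sqrt (real (flen j)))"
    unfolding card_arcs_from_vertex_in_face[OF j u] using u j by (simp add: vertex_face_mat_def)
  finally show ?thesis .
qed

lemma kernel_dim_NtM: "kernel_dim (transpose_mat Nh * Mh) = kernel_dim Cm"
proof (rule kernel_dim_rescaled[OF Cm_carrier _ NtM_entry])
  show "transpose_mat Nh * Mh \<in> carrier_mat nV nF" using Nh_carrier Mh_carrier by simp
  show "1 / sqrt (real (vdeg i)) \<noteq> 0" if "i < nV" for i using vdeg_pos[OF that] by simp
  show "1 / sqrt (real (flen j)) \<noteq> 0" if "j < nF" for j using flen_pos[OF that] by simp
qed

lemma Mh_mult_vec: assumes z: "z \<in> carrier_vec nF" and k: "k < nA"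
  shows "(Mh *\<^sub>v z) $ k = z $ face_idx (as ! k) / sqrt (real (flen (face_idx (as ! k))))"
proof -
  have a: "as ! k \<in> arcs E" using k as_set nth_mem by blast
  have "(Mh *\<^sub>v z) $ k = (\<Sum>j\<in>{0..<nF}. Mh $$ (k,j) * z $ j)"
    using Mh_carrier z k by (simp add: scalar_prod_def)
  also have "\<dots> = (\<Sum>j\<in>{0..<nF}. if j = face_idx (as ! k) then z $ j / sqrt (real (flen j)) else 0)"
  proof (rule sum.cong[OF refl])
    fix j assume j: "j \<in> {0..<nF}"
    have "as ! k \<in> fs ! j \<longleftrightarrow> j = face_idx (as ! k)" using face_idx[OF a] face_idx_eqI[of j "as ! k"] j by auto
    thus "Mh $$ (k,j) * z $ j = (if j = face_idx (as ! k) then z $ j / sqrt (real (flen j)) else 0)"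
      using j Mh_entry[OF k, of j] by auto
  qed
  also have "\<dots> = z $ face_idx (as ! k) / sqrt (real (flen (face_idx (as ! k))))"
    using face_idx(1)[OF a] by (simp add: sum.delta')
  finally show ?thesis .
qed

lemma Nh_mult_vec: assumes y: "y \<in> carrier_vec nV" and k: "k < nA"
  shows "(Nh *\<^sub>v y) $ k = y $ vertex_idx (fst (as ! k)) / sqrt (real (vdeg (vertex_idx (fst (as ! k)))))"
proof -
  have a: "as ! k \<in> arcs E" using k as_set nth_mem by blast
  hence x: "fst (as ! k) \<in> V" using arc_in_V by blast
  have "(Nh *\<^sub>v y) $ k = (\<Sum>u\<in>{0..<nV}. Nh $$ (k,u) * y $ u)"
    using Nh_carrier y k by (simp add: scalar_prod_def)
  also have "\<dots> = (\<Sum>u\<in>{0..<nV}. if u = vertex_idx (fst (as ! k)) then y $ u / sqrt (real (vdeg u)) else 0)"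
  proof (rule sum.cong[OF refl])
    fix u assume u: "u \<in> {0..<nV}"
    have u': "u < nV" using u by simp
    have "fst (as ! k) = vs ! u \<longleftrightarrow> u = vertex_idx (fst (as ! k))"
    proof
      assume "fst (as ! k) = vs ! u" thus "u = vertex_idx (fst (as ! k))" using vertex_idx_nth[OF u'] by simp
    next
      assume "u = vertex_idx (fst (as ! k))" thus "fst (as ! k) = vs ! u" using vertex_idx(2)[OF x] by simp
    qed
    thus "Nh $$ (k,u) * y $ u = (if u = vertex_idx (fst (as ! k)) then y $ u / sqrt (real (vdeg u)) else 0)"
      using u Nh_entry[OF k, of u] by auto
  qed
  also have "\<dots> = y $ vertex_idx (fst (as ! k)) / sqrt (real (vdeg (vertex_idx (fst (as ! k)))))"
    using vertex_idx(1)[OF x] by (simp add: sum.delta')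
  finally show ?thesis .
qed


sublocale orthonormal_pair Mh Nh nA nF nV
  using Mh_carrier Nh_carrier Mh_orthonormal Nh_orthonormal by unfold_locales

lemma arc_nth_obtain:
  assumes "a \<in> arcs E" obtains k where "k < nA" "as ! k = a"
  using assms as_set by (metis in_set_conv_nth)

text \<open>The face successor of an arc starts at the head of the arc, so h is constant along
  edges, hence on the connected graph.\<close>

lemma face_vertex_compatible_const:
  assumes compat: "\<And>a. a \<in> arcs E \<Longrightarrow> g (face_idx a) = h (fst a)"
  shows "\<exists>c. \<forall>j<nF. g j = c"
proof -
  have edge: "h (fst a) = h (snd a)" if a: "a \<in> arcs E" for a
    using compat[OF a] compat[OF fnext_arcs[OF a]] face_idx_fnext[OF a] fst_fnext[OF a] by simp
  obtain a0 where a0: "a0 \<in> arcs E" using circ unfolding circular_def by auto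
  define c where "c = h (fst a0)"
  have h_const: "h v = c" if v: "v \<in> V" for v
  proof -
    have "(fst a0, v) \<in> (arcs E)\<^sup>*" using conn arc_in_V[OF a0] v unfolding connected_graph_def by auto
    thus ?thesis
    proof (induct rule: rtrancl_induct)
      case (step b d)
      thus ?case using edge[of "(b, d)"] by simp
    qed (simp add: c_def)
  qed
  have "g j = c" if j: "j < nF" for j
  proof -
    have "fs ! j \<in> faces E \<rho>" using j fs_set nth_mem by blast
    then obtain a where a: "a \<in> arcs E" "fs ! j = face_of \<rho> a" using faces_obtain_arc by blast
    have "face_idx a = j" using face_idx_eqI[OF j] a face_of_self by simp
    thus ?thesis using compat[OF a(1)] h_const arc_in_V[OF a(1)] by simp
  qed
  thus ?thesis by blast
qed

lemma Mh_mult_sqrt_flen: "Mh *\<^sub>v vec nF (\<lambda>j. sqrt (real (flen j))) = vec nA (\<lambda>_. 1)"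
proof (rule eq_vecI)
  fix k assume "k < dim_vec (vec nA (\<lambda>_. 1 :: real))"
  hence k: "k < nA" by simp
  have a: "as ! k \<in> arcs E" using k as_set nth_mem by blast
  show "(Mh *\<^sub>v vec nF (\<lambda>j. sqrt (real (flen j)))) $ k = vec nA (\<lambda>_. 1) $ k"
    unfolding Mh_mult_vec[OF vec_carrier k] using face_idx(1)[OF a] flen_pos[OF face_idx(1)[OF a]] k
    by simp
qed (use Mh_carrier in simp)

lemma Nh_mult_sqrt_vdeg: "Nh *\<^sub>v vec nV (\<lambda>u. sqrt (real (vdeg u))) = vec nA (\<lambda>_. 1)"
proof (rule eq_vecI)
  fix k assume "k < dim_vec (vec nA (\<lambda>_. 1 :: real))"
  hence k: "k < nA" by simp
  have x: "fst (as ! k) \<in> V" using k as_set nth_mem arc_in_V by blast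
  show "(Nh *\<^sub>v vec nV (\<lambda>u. sqrt (real (vdeg u)))) $ k = vec nA (\<lambda>_. 1) $ k"
    unfolding Nh_mult_vec[OF vec_carrier k] using vertex_idx(1)[OF x] vdeg_pos[OF vertex_idx(1)[OF x]] k
    by simp
qed (use Nh_carrier in simp)

lemma gram_fixed_vectors:
  assumes z: "z \<in> carrier_vec nF" and fixed: "(transpose_mat BtA * BtA) *\<^sub>v z = z"
  shows "\<exists>c. z = c \<cdot>\<^sub>v vec nF (\<lambda>j. sqrt (real (flen j)))"
proof -
  define y where "y = transpose_mat Nh *\<^sub>v (Mh *\<^sub>v z)"
  have yc: "y \<in> carrier_vec nV" unfolding y_def using Mh_carrier Nh_carrier z by simp
  have eq: "Mh *\<^sub>v z = Nh *\<^sub>v y"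
    unfolding y_def by (rule common_image_if_gram_fixed[OF z fixed])
  have compat: "z $ face_idx a / sqrt (real (flen (face_idx a)))
      = y $ vertex_idx (fst a) / sqrt (real (vdeg (vertex_idx (fst a))))" if a: "a \<in> arcs E" for a
  proof -
    obtain k where k: "k < nA" "as ! k = a" using arc_nth_obtain[OF a] .
    show ?thesis using arg_cong[OF eq, of "\<lambda>v. v $ k"] Mh_mult_vec[OF z k(1)] Nh_mult_vec[OF yc k(1)] k
      by simp
  qed
  obtain c where c: "\<forall>j<nF. z $ j / sqrt (real (flen j)) = c"
    using face_vertex_compatible_const[where g = "\<lambda>j. z $ j / sqrt (real (flen j))"
        and h = "\<lambda>v. y $ vertex_idx v / sqrt (real (vdeg (vertex_idx v)))", OF compat] by blast
  have "z = c \<cdot>\<^sub>v vec nF (\<lambda>j. sqrt (real (flen j)))"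
  proof (rule eq_vecI)
    fix j assume "j < dim_vec (c \<cdot>\<^sub>v vec nF (\<lambda>j. sqrt (real (flen j))))"
    hence j: "j < nF" by simp
    have "z $ j / sqrt (real (flen j)) = c" using c j by blast
    moreover have "sqrt (real (flen j)) > 0" using flen_pos[OF j] by simp
    ultimately show "z $ j = (c \<cdot>\<^sub>v vec nF (\<lambda>j. sqrt (real (flen j)))) $ j"
      using j by (simp add: field_simps)
  qed (use z in simp)
  thus ?thesis ..
qed

lemma kernel_dim_char_gram_1: "kernel_dim (char_matrix (transpose_mat BtA * BtA) 1) = 1"
proof -
  define K where "K = transpose_mat BtA * BtA"
  define v0 where "v0 = vec nF (\<lambda>j. sqrt (real (flen j)))"
  have KC: "K \<in> carrier_mat nF nF" unfolding K_def by (rule gram_carrier)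
  have ker: "mat_kernel (char_matrix K 1) = {z \<in> carrier_vec nF. K *\<^sub>v z = z}"
    unfolding mat_kernel_char_matrix[OF KC] by simp
  have v0c: "v0 \<in> carrier_vec nF" unfolding v0_def by simp
  have "Mh *\<^sub>v v0 = Nh *\<^sub>v vec nV (\<lambda>u. sqrt (real (vdeg u)))"
    unfolding v0_def Mh_mult_sqrt_flen Nh_mult_sqrt_vdeg ..
  hence "K *\<^sub>v v0 = v0" unfolding K_def by (rule gram_fixed_if_common_image[OF v0c vec_carrier])
  hence v0k: "v0 \<in> mat_kernel (char_matrix K 1)" unfolding ker using v0c by simp
  obtain a0 where a0: "a0 \<in> arcs E" using circ unfolding circular_def by auto
  have "v0 $ face_idx a0 \<noteq> 0" unfolding v0_def using face_idx(1)[OF a0] flen_pos by simp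
  hence v0nz: "v0 \<noteq> 0\<^sub>v nF" using face_idx(1)[OF a0] by auto
  interpret KK: kernel nF nF "char_matrix K 1" by unfold_locales (use KC in simp)
  have "KK.Ker.span {v0} = mat_kernel (char_matrix K 1)"
  proof
    show "KK.Ker.span {v0} \<subseteq> mat_kernel (char_matrix K 1)"
      using KK.Ker.span_is_subset2[of "{v0}"] v0k by simp
    show "mat_kernel (char_matrix K 1) \<subseteq> KK.Ker.span {v0}"
    proof
      fix z assume "z \<in> mat_kernel (char_matrix K 1)"
      hence zc: "z \<in> carrier_vec nF" and Kz: "K *\<^sub>v z = z" unfolding ker by auto
      obtain c where z: "z = c \<cdot>\<^sub>v v0"
        using gram_fixed_vectors[OF zc Kz[unfolded K_def]] unfolding v0_def ..
      have sub: "submodule class_ring (KK.Ker.span {v0}) KK.VK"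
        by (rule KK.Ker.span_is_submodule) (use v0k in simp)
      have "v0 \<in> KK.Ker.span {v0}" using KK.Ker.span_self v0k by simp
      thus "z \<in> KK.Ker.span {v0}"
        using submodule.smult_closed[OF sub, of c v0] z by (simp add: class_ring_simps)
    qed
  qed
  hence "KK.dim = 1" by (intro KK.Ker.dim1I) (use v0nz v0k in simp_all)
  thus ?thesis unfolding K_def[symmetric] using KC by simp
qed

end

theorem theorem3p4:
  fixes V :: "'v set" and E :: "'v \<Rightarrow> 'v \<Rightarrow> bool" and \<rho> :: "'v \<times> 'v \<Rightarrow> 'v \<times> 'v"
    and as :: "('v \<times> 'v) list" and vs :: "'v list" and fs :: "('v \<times> 'v) set list"
  assumes graph: "simple_graph V E" and conn: "connected_graph V E"
    and rot: "rotation_system E \<rho>" and circ: "circular E \<rho>"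
    and as: "distinct as" "set as = arcs E"
    and vs: "distinct vs" "set vs = V"
    and fs: "distinct fs" "set fs = faces E \<rho>"
  defines "M \<equiv> arc_face_mat as fs" and "N \<equiv> arc_tail_mat as vs"
    and "C \<equiv> vertex_face_mat vs fs"
  defines "Mh \<equiv> normalize_cols M" and "Nh \<equiv> normalize_cols N"
  defines "U \<equiv> cmat (transition_mat Mh Nh)"
    and "Ch \<equiv> cmat (transpose_mat Nh * Mh)"
  shows "(\<Sum>k\<in>{k. eigenvalue U k \<and> Im k \<noteq> 0}. eig_mult U k)
           = 2 * vec_space.rank (length vs) C - 2
    \<and> (\<forall>\<mu> \<theta>. eigenvalue (Ch * transpose_mat Ch) (complex_of_real \<mu>) \<longrightarrow> 0 < \<mu> \<longrightarrow> \<mu> < 1 \<longrightarrow>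
          cos \<theta> = 2 * \<mu> - 1 \<longrightarrow>
          (
          bij_betw (\<lambda>y. complex_of_real (cos \<theta> + 1) \<cdot>\<^sub>v (cmat Nh *\<^sub>v y)
                        - (cis \<theta> + 1) \<cdot>\<^sub>v (cmat Mh *\<^sub>v (transpose_mat Ch *\<^sub>v y)))
            (eigenspace (Ch * transpose_mat Ch) (complex_of_real \<mu>))
            (eigenspace U (cis \<theta>))
          \<and> bij_betw (\<lambda>y. complex_of_real (cos \<theta> + 1) \<cdot>\<^sub>v (cmat Nh *\<^sub>v y)
                        - (cis (- \<theta>) + 1) \<cdot>\<^sub>v (cmat Mh *\<^sub>v (transpose_mat Ch *\<^sub>v y)))
            (eigenspace (Ch * transpose_mat Ch) (complex_of_real \<mu>))
            (eigenspace U (cis (- \<theta>)))))"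
proof -
  interpret circular_embedding V E \<rho> as vs fs
    by unfold_locales (use graph conn rot circ as vs fs in auto)
  have nonreal: "(\<Sum>k\<in>{k. eigenvalue U k \<and> Im k \<noteq> 0}. eig_mult U k) = 2 * vec_space.rank (length vs) C - 2"
    using sum_eig_mult_nonreal_U kernel_dim_NtM kernel_dim_char_gram_1 rank_plus_kernel_dim[OF Cm_carrier]
    unfolding U_def Mh_def Nh_def M_def N_def C_def by arith
  have lift: "bij_betw (\<lambda>y. complex_of_real (cos \<theta> + 1) \<cdot>\<^sub>v (cmat Nh *\<^sub>v y)
                        - (cis \<theta> + 1) \<cdot>\<^sub>v (cmat Mh *\<^sub>v (transpose_mat Ch *\<^sub>v y)))
            (eigenspace (Ch * transpose_mat Ch) (complex_of_real \<mu>)) (eigenspace U (cis \<theta>))"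
    if "0 < \<mu>" "\<mu> < 1" "cos \<theta> = 2 * \<mu> - 1" for \<mu> \<theta>
  proof -
    have "cis \<theta> \<noteq> 1" using that by (auto simp: complex_eq_iff)
    moreover have "complex_of_real (cos \<theta> + 1) = 2 * complex_of_real \<mu>" using that by simp
    ultimately show ?thesis
      using bij_betw_lift_eigenspaces[OF cis_quadratic[OF that(3)]] that(1)
      unfolding lift_def U_def Ch_def Mh_def Nh_def M_def N_def by simp
  qed
  show ?thesis
  proof (intro conjI allI impI nonreal)
    fix \<mu> \<theta> :: real assume "0 < \<mu>" "\<mu> < 1" "cos \<theta> = 2 * \<mu> - 1"
    thus "bij_betw (\<lambda>y. complex_of_real (cos \<theta> + 1) \<cdot>\<^sub>v (cmat Nh *\<^sub>v y)
                        - (cis \<theta> + 1) \<cdot>\<^sub>v (cmat Mh *\<^sub>v (transpose_mat Ch *\<^sub>v y)))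
            (eigenspace (Ch * transpose_mat Ch) (complex_of_real \<mu>)) (eigenspace U (cis \<theta>))"
      and "bij_betw (\<lambda>y. complex_of_real (cos \<theta> + 1) \<cdot>\<^sub>v (cmat Nh *\<^sub>v y)
                        - (cis (- \<theta>) + 1) \<cdot>\<^sub>v (cmat Mh *\<^sub>v (transpose_mat Ch *\<^sub>v y)))
            (eigenspace (Ch * transpose_mat Ch) (complex_of_real \<mu>)) (eigenspace U (cis (- \<theta>)))"
      using lift[of \<mu> \<theta>] lift[of \<mu> "- \<theta>"] by simp_all
  qed
qed

end
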